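(* Let $\mathcal X$ be locally convex and let $\rho$ be proper, convex and lower semicontinuous. Assume $(\mathcal X,\mathcal X')$ is an admissible pair, $\mathcal A$ is a closed convex cone with $\mathcal A\cap(-\mathcal A)=\{0\}$, $\mathcal P$ is closed, $V_0$ is lower semicontinuous, $V_1$ is anti-star shaped and upper semicontinuous, and $\mathcal L=\{0\}$. Then $\mathcal D_{str}$ is nonempty, $\sigma_{\mathcal A}(\psi)=0$ for every $\psi\in\mathcal D_{str}$, and $$\rho(X)=\sup_{\psi\in\mathcal D_{str}}\{\sigma_{\mathcal P,V_0,V_1}(\psi)-\psi(X)\}\quad\text{for all }X\in\mathcal X.$$
   Context: Standing setup: Let $\mathcal{X}$ be a real topological vector space partially ordered by a convex cone $\mathcal{X}_+\subset\mathcal X$; write $X\ge Y$ iff $X-Y\in\mathcal X_+$. Fix $N\in\mathbb N$ and: a set $\mathcal P\subset\mathbb R^N$ with $0\in\mathcal P$; a function $V_0:\mathbb R^N\to\mathbb R$ with $V_0(0)=0$ and $V_0(x)\ge -V_0(-x)$ for all $x\in\mathbb R^N$; a map $V_1:\mathbb R^N\to\mathcal X$ with $V_1(0)=0$ and $V_1(x)\le -V_1(-x)$ for all $x\in\mathbb R^N$; a set $\mathcal A\subset\mathcal X$ with $0\in\mathcal A$ and $\mathcal A+\mathcal X_+\subset\mathcal A$. The risk measure is $\rho:\mathcal X\to[-\infty,\infty]$, $\rho(X)=\inf\{V_0(x): x\in\mathcal P,\ X+V_1(x)\in\mathcal A\}$, with $\inf\emptyset=+\infty$. $\rho$ is proper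 if it never takes the value $-\infty$ and is not identically $+\infty$. $V_1$ is anti-star shaped if $V_1(\lambda x)\ge\lambda V_1(x)$ for all $\lambda\in[0,1]$, $x\in\mathbb R^N$; it is upper semicontinuous at $x$ if for every neighborhood $\mathcal U$ of $V_1(x)$ there exists a neighborhood $\mathcal V$ of $x$ with $V_1(\mathcal V)\subset\mathcal U-\mathcal X_+$, and upper semicontinuous if this holds at every $x$. Asymptotic notions: for a nonempty set $C$ in a topological vector space, $C^\infty=\{X:\exists\text{ nets }(X_\alpha)\subset C,\ (\lambda_\alpha)\subset[0,\infty),\ \lambda_\alpha\to0,\ \lambda_\alpha X_\alpha\to X\}$. For $f:\mathbb R^N\to\mathbb R$, its asymptotic function $f^\infty$ is the function whose epigraph equals $(\operatorname{epi}f)^\infty$, where $\operatorname{epi}f=\{(x,m)\in\mathbb R^N\times\mathbb R: f(x)\le m\}$. $\mathcal L=\{x\in\mathcal P^\infty: V_0^\infty(x)\le0,\ V_1(x)\in\mathcal A^\infty\}$. Duality notation: $\mathcal X'$ is the topological dual of $\mathcal X$. For $\psi\in\mathcal X'$: $\sigma_{\mathcal A}(\psi)=\inf_{X\in\mathcal A}\psi(X)$ and $\sigma_{\mathcal P,V_0,V_1}(\psi)=\inf_{x\in\mathcal P}\{V_0(x)-\psi(V_1(x))\}$. $\mathcal D=\{\psi\in\mathcal X':\sigma_{\mathcal A}(\psi)>-\infty,\ \sigma_{\mathcal P,V_0,V_1}(\psi)>-\infty\}$ and $\mathcal D_{str}=\{\psi\in\mathcal D:\psi(X)>0\ \forall X\in\mathcal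 A\setminus\{0\}\}$. $(\mathcal X,\mathcal X')$ is an admissible pair if there exists a separable normed space $\mathcal Y$ such that $\mathcal X'$ is (identified with) the norm dual of $\mathcal Y$ and the topology $\sigma(\mathcal X',\mathcal X)$ is weaker than $\sigma(\mathcal X',\mathcal Y)$. *)

theory Defs
  imports "HOL-Analysis.Analysis" "HOL-Library.Extended_Real"
begin

definition tvs :: "'x::{real_vector,topological_space} itself \<Rightarrow> bool" where
  "tvs _ \<longleftrightarrow>
     continuous_on UNIV (\<lambda>p::'x \<times> 'x. fst p + snd p) \<and>
     continuous_on UNIV (\<lambda>p::real \<times> 'x. fst p *\<^sub>R snd p)"

definition locally_convex :: "'x::{real_vector,topological_space} itself \<Rightarrow> bool" where
  "locally_convex _ \<longleftrightarrow> tvs TYPE('x) \<and>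
     (\<forall>U::'x set. open U \<and> 0 \<in> U \<longrightarrow> (\<exists>V. open V \<and> convex V \<and> 0 \<in> V \<and> V \<subseteq> U))"

definition lsc :: "('a::topological_space \<Rightarrow> 'b::linorder) \<Rightarrow> bool" where
  "lsc f \<longleftrightarrow> (\<forall>x c. c < f x \<longrightarrow> (\<exists>U. open U \<and> x \<in> U \<and> (\<forall>y\<in>U. c < f y)))"

definition usc_wrt :: "'x::{real_vector,topological_space} set \<Rightarrow> ('a::topological_space \<Rightarrow> 'x) \<Rightarrow> bool" where
  "usc_wrt Xp V1 \<longleftrightarrow> (\<forall>x U. open U \<and> V1 x \<in> U \<longrightarrow>
      (\<exists>V. open V \<and> x \<in> V \<and> V1 ` V \<subseteq> {u - p |u p. u \<in> U \<and> p \<in> Xp}))"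

definition anti_star_shaped :: "'x::real_vector set \<Rightarrow> ('a::real_vector \<Rightarrow> 'x) \<Rightarrow> bool" where
  "anti_star_shaped Xp V1 \<longleftrightarrow> (\<forall>l x. 0 \<le> l \<and> l \<le> 1 \<longrightarrow> V1 (l *\<^sub>R x) - l *\<^sub>R V1 x \<in> Xp)"

definition rho :: "(real^'n) set \<Rightarrow> (real^'n \<Rightarrow> real) \<Rightarrow> (real^'n \<Rightarrow> 'x::real_vector) \<Rightarrow> 'x set \<Rightarrow> 'x \<Rightarrow> ereal" where
  "rho P V0 V1 A X = Inf ((\<lambda>x. ereal (V0 x)) ` {x \<in> P. X + V1 x \<in> A})"

definition proper_fun :: "('x \<Rightarrow> ereal) \<Rightarrow> bool" where
  "proper_fun f \<longleftrightarrow> (\<forall>X. f X \<noteq> -\<infinity>) \<and> (\<exists>X. f X \<noteq> \<infinity>)"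

definition convex_efun :: "('x::real_vector \<Rightarrow> ereal) \<Rightarrow> bool" where
  "convex_efun f \<longleftrightarrow> convex {(X, m::real). f X \<le> ereal m}"

text \<open>Nets are represented by (proper) filters on the set of pairs (X_alpha, lambda_alpha).\<close>
definition asym_cone :: "'a::{real_vector,topological_space} set \<Rightarrow> 'a set" where
  "asym_cone C = {X. \<exists>F :: ('a \<times> real) filter. F \<noteq> bot \<and>
      eventually (\<lambda>p. fst p \<in> C \<and> 0 \<le> snd p) F \<and>
      ((\<lambda>p. snd p) \<longlongrightarrow> 0) F \<and>
      ((\<lambda>p. snd p *\<^sub>R fst p) \<longlongrightarrow> X) F}"

definition epi :: "('a \<Rightarrow> real) \<Rightarrow> ('a \<times> real) set" where
  "epi f = {(x, m). f x \<le> m}"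

definition asym_fun :: "('a::{real_vector,topological_space} \<Rightarrow> real) \<Rightarrow> 'a \<Rightarrow> ereal" where
  "asym_fun f x = Inf {ereal m |m. (x, m) \<in> asym_cone (epi f)}"

definition LL :: "(real^'n) set \<Rightarrow> (real^'n \<Rightarrow> real) \<Rightarrow> (real^'n \<Rightarrow> 'x::{real_vector,topological_space}) \<Rightarrow> 'x set \<Rightarrow> (real^'n) set" where
  "LL P V0 V1 A = {x \<in> asym_cone P. asym_fun V0 x \<le> 0 \<and> V1 x \<in> asym_cone A}"

definition topdual :: "'x::{real_vector,topological_space} itself \<Rightarrow> ('x \<Rightarrow> real) set" where
  "topdual _ = {\<psi>. linear \<psi> \<and> continuous_on UNIV \<psi>}"

definition sigmaA :: "'x set \<Rightarrow> ('x \<Rightarrow> real) \<Rightarrow> ereal" where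
  "sigmaA A \<psi> = Inf ((\<lambda>X. ereal (\<psi> X)) ` A)"

definition sigmaPV :: "(real^'n) set \<Rightarrow> (real^'n \<Rightarrow> real) \<Rightarrow> (real^'n \<Rightarrow> 'x) \<Rightarrow> ('x \<Rightarrow> real) \<Rightarrow> ereal" where
  "sigmaPV P V0 V1 \<psi> = Inf ((\<lambda>x. ereal (V0 x - \<psi> (V1 x))) ` P)"

definition DD :: "(real^'n) set \<Rightarrow> (real^'n \<Rightarrow> real) \<Rightarrow> (real^'n \<Rightarrow> 'x::{real_vector,topological_space}) \<Rightarrow> 'x set \<Rightarrow> ('x \<Rightarrow> real) set" where
  "DD P V0 V1 A = {\<psi> \<in> topdual TYPE('x). sigmaA A \<psi> > -\<infinity> \<and> sigmaPV P V0 V1 \<psi> > -\<infinity>}"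

definition DDstr :: "(real^'n) set \<Rightarrow> (real^'n \<Rightarrow> real) \<Rightarrow> (real^'n \<Rightarrow> 'x::{real_vector,topological_space}) \<Rightarrow> 'x set \<Rightarrow> ('x \<Rightarrow> real) set" where
  "DDstr P V0 V1 A = {\<psi> \<in> DD P V0 V1 A. \<forall>X \<in> A - {0}. \<psi> X > 0}"

definition weak_top :: "'a set \<Rightarrow> ('a \<Rightarrow> real) set \<Rightarrow> 'a topology" where
  "weak_top S fs = topology_generated_by {{a \<in> S. f a \<in> U} |f U. f \<in> fs \<and> open U}"

text \<open>(X, X') is an admissible pair, witnessed by the separable normed space 'y:
  X' is identified (via a linear bijection Phi) with the norm dual of 'y, and
  sigma(X',X) is weaker than sigma(X','y).\<close>
definition admissible_pair_via :: "'y::real_normed_vector itself \<Rightarrow> 'x::{real_vector,topological_space} itself \<Rightarrow> bool" where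
  "admissible_pair_via _ _ \<longleftrightarrow>
     (\<exists>D::'y set. countable D \<and> closure D = UNIV) \<and>
     (\<exists>Phi :: ('x \<Rightarrow> real) \<Rightarrow> ('y \<Rightarrow> real).
        bij_betw Phi (topdual TYPE('x)) {g. bounded_linear g} \<and>
        (\<forall>\<psi>\<in>topdual TYPE('x). \<forall>\<phi>\<in>topdual TYPE('x). \<forall>a b.
            Phi (\<lambda>X. a * \<psi> X + b * \<phi> X) = (\<lambda>y. a * Phi \<psi> y + b * Phi \<phi> y)) \<and>
        (\<forall>U. openin (weak_top (topdual TYPE('x)) {(\<lambda>\<psi>. \<psi> X) |X. True}) U \<longrightarrow>
             openin (weak_top (topdual TYPE('x)) {(\<lambda>\<psi>. Phi \<psi> y) |y. True}) U))"

end

theory Submission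
  imports Defs
begin

text \<open>Representing \<open>\<rho>\<close> as the supremum of \<open>\<sigma>\<^sub>P\<^sub>,\<^sub>V\<^sub>0\<^sub>,\<^sub>V\<^sub>1(\<psi>) - \<psi>(X)\<close> over \<open>\<D>\<close> is convex duality: a point
  strictly below the closed convex epigraph of \<open>\<rho>\<close> is separated from it by a continuous affine
  functional on \<open>\<X> \<times> \<real>\<close> (Hahn--Banach, obtained from minimal sublinear functionals and the Minkowski
  gauge), and every continuous affine minorant of \<open>\<rho>\<close> has its slope in \<open>\<D>\<close>.

  \<open>\<D>\<close> separates the points of \<open>A - {0}\<close>: if every \<open>\<psi> \<in> \<D>\<close> vanished at \<open>X\<close>, duality would give
  \<open>\<rho>(-k X) = \<rho>(0)\<close> for all \<open>k\<close>, and the corresponding feasible points \<open>x\<^sub>k\<close> would either stay bounded,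
  forcing \<open>-X \<in> A\<close> against pointedness, or escape to infinity and produce a nonzero element of \<open>\<L>\<close>.
  Since \<open>\<X>'\<close> is the dual of a separable normed space, \<open>\<D>\<close> is covered by countably many norm-bounded
  slices, each separable for pointwise convergence; a summable weighted series over a countable
  separating family converges pointwise on \<open>\<X>\<close> and, normalised, lies in \<open>\<D>\<^sub>s\<^sub>t\<^sub>r\<close>. Convex
  combinations with it show that the supremum over \<open>\<D>\<close> equals the one over \<open>\<D>\<^sub>s\<^sub>t\<^sub>r\<close>.\<close>

section \<open>Sublinear functionals and the Hahn--Banach theorem\<close>

definition sublinear :: "('v::real_vector \<Rightarrow> real) \<Rightarrow> bool" where
  "sublinear q \<longleftrightarrow> (\<forall>x y. q (x + y) \<le> q x + q y) \<and> (\<forall>t x. 0 \<le> t \<longrightarrow> q (t *\<^sub>R x) = t * q x)"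

lemma sublinear_add_le: "sublinear q \<Longrightarrow> q (x + y) \<le> q x + q y"
  unfolding sublinear_def by blast

lemma sublinear_scaleR: "sublinear q \<Longrightarrow> 0 \<le> t \<Longrightarrow> q (t *\<^sub>R x) = t * q x"
  unfolding sublinear_def by blast

lemma sublinear_zero: "sublinear q \<Longrightarrow> q 0 = 0"
  using sublinear_scaleR[of q 0 0] by simp

lemma sublinear_minus_le: "sublinear q \<Longrightarrow> - q (- x) \<le> q x"
  using sublinear_add_le[of q x "- x"] sublinear_zero[of q] by simp

lemma sublinearI:
  assumes add: "\<And>x y. q (x + y) \<le> q x + q y" and zero: "q 0 = 0"
    and scale: "\<And>t x. 0 < t \<Longrightarrow> q (t *\<^sub>R x) \<le> t * q x"
  shows "sublinear q"
proof -
  have "q (t *\<^sub>R x) = t * q x" if t: "0 < t" for t x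
  proof (rule antisym)
    show "q (t *\<^sub>R x) \<le> t * q x" using scale t .
    have "q x = q (inverse t *\<^sub>R (t *\<^sub>R x))" using t by simp
    also have "\<dots> \<le> inverse t * q (t *\<^sub>R x)" by (rule scale) (use t in simp)
    finally show "t * q x \<le> q (t *\<^sub>R x)" using t by (simp add: field_simps)
  qed
  then show ?thesis
    using add zero unfolding sublinear_def by (metis less_eq_real_def mult_zero_left scaleR_zero_left)
qed

lemma cInf_le_cInf_add:
  fixes S T U :: "real set"
  assumes S: "S \<noteq> {}" and T: "T \<noteq> {}" and U: "bdd_below U"
    and below: "\<And>s t. s \<in> S \<Longrightarrow> t \<in> T \<Longrightarrow> \<exists>u\<in>U. u \<le> s + t"
  shows "Inf U \<le> Inf S + Inf T"
proof -
  have "Inf U - t \<le> Inf S" if t: "t \<in> T" for t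
  proof (rule cInf_greatest[OF S])
    fix s assume "s \<in> S"
    then obtain u where "u \<in> U" "u \<le> s + t" using below t by blast
    then show "Inf U - t \<le> s" using cInf_lower[OF _ U] by fastforce
  qed
  then have "Inf U - Inf S \<le> Inf T"
    by (intro cInf_greatest[OF T]) (simp add: algebra_simps)
  then show ?thesis by simp
qed

text \<open>For \<open>t \<rightarrow> \<infinity>\<close> the infimum below is the one-sided derivative of \<open>q\<close> at \<open>z\<close> in direction
  \<open>x\<close>; it is a sublinear functional below \<open>q\<close> that is odd along \<open>z\<close>.\<close>
definition sublinear_tangent :: "('v::real_vector \<Rightarrow> real) \<Rightarrow> 'v \<Rightarrow> 'v \<Rightarrow> real" where
  "sublinear_tangent q z x = Inf ((\<lambda>t. q (x + t *\<^sub>R z) - t * q z) ` {0<..})"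

context
  fixes q :: "'v::real_vector \<Rightarrow> real"
  assumes q: "sublinear q"
begin

lemma bdd_below_sublinear_tangent: "bdd_below ((\<lambda>t. q (x + t *\<^sub>R z) - t * q z) ` {0<..})"
proof -
  have "- q (- x) \<le> q (x + t *\<^sub>R z) - t * q z" if "0 < t" for t
  proof -
    have "q (t *\<^sub>R z) \<le> q (x + t *\<^sub>R z) + q (- x)"
      using sublinear_add_le[OF q, of "x + t *\<^sub>R z" "- x"] by simp
    then show ?thesis using sublinear_scaleR[OF q, of t z] that by simp
  qed
  then show ?thesis by (auto simp: bdd_below_def)
qed

lemma sublinear_tangent_le_elem: "0 < t \<Longrightarrow> sublinear_tangent q z x \<le> q (x + t *\<^sub>R z) - t * q z"
  unfolding sublinear_tangent_def by (rule cINF_lower[OF bdd_below_sublinear_tangent]) simp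

lemma sublinear_tangent_le: "sublinear_tangent q z x \<le> q x"
  using sublinear_tangent_le_elem[of 1 z x] sublinear_add_le[OF q, of x z] by simp

lemma sublinear_tangent_minus: "sublinear_tangent q z (- z) \<le> - q z"
  using sublinear_tangent_le_elem[of 1 z "- z"] sublinear_zero[OF q] by simp

lemma sublinear_sublinear_tangent: "sublinear (sublinear_tangent q z)"
proof (rule sublinearI)
  fix x y
  show "sublinear_tangent q z (x + y) \<le> sublinear_tangent q z x + sublinear_tangent q z y"
    unfolding sublinear_tangent_def
  proof (rule cInf_le_cInf_add)
    show "bdd_below ((\<lambda>t. q (x + y + t *\<^sub>R z) - t * q z) ` {0<..})"
      by (rule bdd_below_sublinear_tangent)
    fix a b
    assume "a \<in> (\<lambda>t. q (x + t *\<^sub>R z) - t * q z) ` {0<..}" "b \<in> (\<lambda>t. q (y + t *\<^sub>R z) - t * q z) ` {0<..}"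
    then obtain s t where st: "0 < s" "0 < t" "a = q (x + s *\<^sub>R z) - s * q z" "b = q (y + t *\<^sub>R z) - t * q z"
      by auto
    have "q ((x + y) + (s + t) *\<^sub>R z) \<le> q (x + s *\<^sub>R z) + q (y + t *\<^sub>R z)"
      using sublinear_add_le[OF q, of "x + s *\<^sub>R z" "y + t *\<^sub>R z"] by (simp add: algebra_simps)
    moreover have "q (x + y + (s + t) *\<^sub>R z) - (s + t) * q z \<in> (\<lambda>t. q (x + y + t *\<^sub>R z) - t * q z) ` {0<..}"
      by (rule image_eqI[of _ _ "s + t"]) (use st in auto)
    ultimately show "\<exists>u\<in>(\<lambda>t. q (x + y + t *\<^sub>R z) - t * q z) ` {0<..}. u \<le> a + b"
      using st by (force simp: algebra_simps)
  qed auto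
next
  have "sublinear_tangent q z 0 \<le> 0" using sublinear_tangent_le[of z 0] sublinear_zero[OF q] by simp
  moreover have "0 \<le> sublinear_tangent q z 0"
    unfolding sublinear_tangent_def by (rule cINF_greatest) (auto simp: sublinear_scaleR[OF q])
  ultimately show "sublinear_tangent q z 0 = 0" by simp
next
  fix c :: real and x assume c: "0 < c"
  have "sublinear_tangent q z (c *\<^sub>R x) / c \<le> sublinear_tangent q z x"
    unfolding sublinear_tangent_def[of q z x]
  proof (rule cINF_greatest)
    fix u :: real assume "u \<in> {0<..}"
    then have u: "0 < u" by simp
    have eq: "c *\<^sub>R x + (c * u) *\<^sub>R z = c *\<^sub>R (x + u *\<^sub>R z)" by (simp add: algebra_simps)
    have "sublinear_tangent q z (c *\<^sub>R x) \<le> q (c *\<^sub>R x + (c * u) *\<^sub>R z) - (c * u) * q z"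
      by (rule sublinear_tangent_le_elem) (use c u in simp)
    also have "\<dots> = c * (q (x + u *\<^sub>R z) - u * q z)"
      by (simp only: eq sublinear_scaleR[OF q less_imp_le[OF c]]) (simp add: algebra_simps)
    finally have "sublinear_tangent q z (c *\<^sub>R x) \<le> c * (q (x + u *\<^sub>R z) - u * q z)" .
    then show "sublinear_tangent q z (c *\<^sub>R x) / c \<le> q (x + u *\<^sub>R z) - u * q z"
      using c by (simp add: divide_simps mult.commute)
  qed simp
  then show "sublinear_tangent q z (c *\<^sub>R x) \<le> c * sublinear_tangent q z x"
    using c by (simp add: divide_simps mult.commute)
qed

end

lemma sublinear_INF_chain:
  fixes Q :: "('v::real_vector \<Rightarrow> real) set"
  assumes ne: "Q \<noteq> {}" and sub: "\<And>q. q \<in> Q \<Longrightarrow> sublinear q" and le: "\<And>q. q \<in> Q \<Longrightarrow> q \<le> p"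
    and chain: "\<And>q q'. q \<in> Q \<Longrightarrow> q' \<in> Q \<Longrightarrow> q \<le> q' \<or> q' \<le> q"
  shows "sublinear (\<lambda>x. INF q\<in>Q. q x)"
proof -
  have bdd: "bdd_below ((\<lambda>q. q x) ` Q)" for x
  proof -
    have "- p (- x) \<le> q x" if "q \<in> Q" for q
      using sublinear_minus_le[OF sub[OF that], of x] le[OF that] by (smt (verit) le_funD)
    then show ?thesis by (auto simp: bdd_below_def)
  qed
  show ?thesis
  proof (rule sublinearI)
    fix x y
    show "(INF q\<in>Q. q (x + y)) \<le> (INF q\<in>Q. q x) + (INF q\<in>Q. q y)"
    proof (rule cInf_le_cInf_add)
      fix a b assume "a \<in> (\<lambda>q. q x) ` Q" "b \<in> (\<lambda>q. q y) ` Q"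
      then obtain q q' where qq: "q \<in> Q" "q' \<in> Q" "a = q x" "b = q' y" by blast
      have min_le: "r (x + y) \<le> q x + q' y" if "r \<in> Q" "r \<le> q" "r \<le> q'" for r
        using sublinear_add_le[OF sub[OF that(1)], of x y] le_funD[OF that(2), of x] le_funD[OF that(3), of y]
        by linarith
      show "\<exists>u\<in>(\<lambda>q. q (x + y)) ` Q. u \<le> a + b"
        using chain[OF qq(1,2)] min_le[of q] min_le[of q'] qq by auto
    qed (use ne bdd in auto)
  next
    show "(INF q\<in>Q. q 0) = 0" using ne by (simp add: sub sublinear_zero cong: INF_cong_simp)
  next
    fix t :: real and x assume t: "0 < t"
    have "(INF q\<in>Q. q (t *\<^sub>R x)) / t \<le> (INF q\<in>Q. q x)"
    proof (rule cINF_greatest[OF ne])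
      fix q assume "q \<in> Q"
      then have "(INF q\<in>Q. q (t *\<^sub>R x)) \<le> q (t *\<^sub>R x)" by (rule cINF_lower[OF bdd])
      also have "\<dots> = t * q x" using sublinear_scaleR[OF sub[OF \<open>q \<in> Q\<close>]] t by simp
      finally have "(INF q\<in>Q. q (t *\<^sub>R x)) \<le> t * q x" .
      then show "(INF q\<in>Q. q (t *\<^sub>R x)) / t \<le> q x" using t by (simp add: divide_simps mult.commute)
    qed
    then show "(INF q\<in>Q. q (t *\<^sub>R x)) \<le> t * (INF q\<in>Q. q x)" using t by (simp add: divide_simps mult.commute)
  qed
qed

lemma epi_subset_iff: "epi q \<subseteq> epi q' \<longleftrightarrow> q' \<le> q"
proof
  assume sub: "epi q \<subseteq> epi q'"
  show "q' \<le> q"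
  proof (rule le_funI)
    fix x
    have "(x, q x) \<in> epi q'" using sub unfolding epi_def by blast
    then show "q' x \<le> q x" unfolding epi_def by simp
  qed
qed (auto simp: epi_def intro: order_trans[OF le_funD])

text \<open>Zorn's lemma, applied to the epigraphs ordered by inclusion.\<close>
lemma minimal_sublinear_below:
  fixes p :: "'v::real_vector \<Rightarrow> real"
  assumes p: "sublinear p"
  obtains q where "sublinear q" "q \<le> p" "\<And>q'. sublinear q' \<Longrightarrow> q' \<le> q \<Longrightarrow> q' = q"
proof -
  define \<E> where "\<E> = {epi q |q. sublinear q \<and> q \<le> p}"
  have "\<exists>U\<in>\<E>. \<forall>X\<in>C. X \<subseteq> U" if C: "C \<in> chains \<E>" for C
  proof (cases "C = {}")
    case True then show ?thesis using p unfolding \<E>_def by blast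
  next
    case False
    define Q where "Q = {q. epi q \<in> C \<and> sublinear q \<and> q \<le> p}"
    define m where "m = (\<lambda>x. INF q\<in>Q. q x)"
    have CQ: "\<exists>q\<in>Q. X = epi q" if "X \<in> C" for X
    proof -
      have "X \<in> \<E>" using C that unfolding chains_def by blast
      then obtain q where "X = epi q" "sublinear q" "q \<le> p" unfolding \<E>_def by blast
      with that show ?thesis unfolding Q_def by blast
    qed
    have Qne: "Q \<noteq> {}" using CQ False by blast
    have m: "sublinear m" unfolding m_def
    proof (rule sublinear_INF_chain[OF Qne, where p = p])
      fix q q' assume "q \<in> Q" "q' \<in> Q"
      then have "epi q \<subseteq> epi q' \<or> epi q' \<subseteq> epi q"
        using C unfolding chains_def chain_subset_def Q_def by blast
      then show "q \<le> q' \<or> q' \<le> q" unfolding epi_subset_iff by blast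
    qed (simp_all add: Q_def)
    have m_le: "m \<le> q" if "q \<in> Q" for q
    proof (rule le_funI, unfold m_def, rule cINF_lower[OF _ that])
      fix x
      have "- p (- x) \<le> r x" if "r \<in> Q" for r
      proof -
        have "sublinear r" "r \<le> p" using that unfolding Q_def by simp_all
        then show ?thesis using sublinear_minus_le[of r x] le_funD[of r p "- x"] by linarith
      qed
      then show "bdd_below ((\<lambda>q. q x) ` Q)" by (auto simp: bdd_below_def)
    qed
    obtain q0 where "q0 \<in> Q" using Qne by blast
    then have "m \<le> p" using m_le[of q0] unfolding Q_def by (auto intro: order_trans)
    then have "epi m \<in> \<E>" unfolding \<E>_def using m by blast
    moreover have "X \<subseteq> epi m" if "X \<in> C" for X
      using CQ[OF that] m_le epi_subset_iff by metis
    ultimately show ?thesis by blast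
  qed
  then obtain M where "M \<in> \<E>" and max: "\<forall>X\<in>\<E>. M \<subseteq> X \<longrightarrow> X = M"
    using Zorn_Lemma2[of \<E>] by blast
  then obtain q where q: "M = epi q" "sublinear q" "q \<le> p" unfolding \<E>_def by blast
  show ?thesis
  proof (rule that[OF q(2,3)])
    fix q' assume q': "sublinear q'" "q' \<le> q"
    have "epi q' \<in> \<E>" unfolding \<E>_def using q' order_trans[OF q'(2) q(3)] by blast
    moreover have "M \<subseteq> epi q'" using q(1) q'(2) epi_subset_iff by blast
    ultimately have "epi q' = epi q" using max q(1) by blast
    then have "q \<le> q'" using epi_subset_iff[of q' q] by simp
    then show "q' = q" using q'(2) by (rule antisym[rotated])
  qed
qed

lemma minimal_sublinear_linear:
  assumes q: "sublinear q" and min: "\<And>q'. sublinear q' \<Longrightarrow> q' \<le> q \<Longrightarrow> q' = q"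
  shows "linear q"
proof -
  have odd: "q (- w) = - q w" for w
  proof -
    have "sublinear_tangent q w = q"
      by (rule min[OF sublinear_sublinear_tangent[OF q]]) (simp add: le_fun_def sublinear_tangent_le[OF q])
    then show ?thesis
      using sublinear_tangent_minus[OF q, of w] sublinear_minus_le[OF q, of w] by simp
  qed
  show ?thesis
  proof (rule linearI)
    fix x y
    show "q (x + y) = q x + q y"
      using sublinear_add_le[OF q, of x y] sublinear_add_le[OF q, of "- x" "- y"] odd[of "x + y"] odd[of x] odd[of y]
      by (simp add: add.commute)
  next
    fix c :: real and x
    show "q (c *\<^sub>R x) = c *\<^sub>R q x"
      using sublinear_scaleR[OF q, of c x] sublinear_scaleR[OF q, of "- c" "- x"] odd[of x]
      by (cases "0 \<le> c") auto
  qed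
qed

text \<open>Hahn--Banach, via a minimal sublinear functional below the tangent of \<open>p\<close> at \<open>z\<close>.\<close>
lemma sublinear_linear_minorant:
  fixes p :: "'v::real_vector \<Rightarrow> real"
  assumes p: "sublinear p"
  obtains F where "linear F" "F \<le> p" "F z = p z"
proof -
  obtain q where q: "sublinear q" "q \<le> sublinear_tangent p z"
    and min: "\<And>q'. sublinear q' \<Longrightarrow> q' \<le> q \<Longrightarrow> q' = q"
    using minimal_sublinear_below[OF sublinear_sublinear_tangent[OF p]] by blast
  have lin: "linear q" by (rule minimal_sublinear_linear[OF q(1) min])
  have qp: "q \<le> p"
    using q(2) sublinear_tangent_le[OF p] by (auto simp: le_fun_def intro: order_trans)
  have "p z \<le> q z"
    using le_funD[OF q(2), of "- z"] sublinear_tangent_minus[OF p, of z] lin by (simp add: linear_neg)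
  then have "q z = p z" using le_funD[OF qp, of z] by linarith
  with lin qp show ?thesis by (rule that)
qed

section \<open>The Minkowski gauge and algebraic separation\<close>

definition minkowski_gauge :: "'v::real_vector set \<Rightarrow> 'v \<Rightarrow> real" where
  "minkowski_gauge K v = Inf {t. 0 < t \<and> inverse t *\<^sub>R v \<in> K}"

context
  fixes K :: "'v::real_vector set"
  assumes convex: "convex K" and zero: "0 \<in> K" and absorbing: "\<And>v. \<exists>t>0. t *\<^sub>R v \<in> K"
begin

lemma gauge_set_nonempty: "{t. 0 < t \<and> inverse t *\<^sub>R v \<in> K} \<noteq> {}"
proof -
  obtain s where "0 < s" "s *\<^sub>R v \<in> K" using absorbing by blast
  then have "inverse s \<in> {t. 0 < t \<and> inverse t *\<^sub>R v \<in> K}" by simp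
  then show ?thesis by blast
qed

lemma bdd_below_gauge_set: "bdd_below {t. 0 < t \<and> inverse t *\<^sub>R v \<in> K}"
  by (rule bdd_belowI[of _ 0]) simp

lemma gauge_set_mono:
  assumes t: "0 < t" "inverse t *\<^sub>R v \<in> K" and "t \<le> t'"
  shows "inverse t' *\<^sub>R v \<in> K"
proof -
  have "(t / t') *\<^sub>R (inverse t *\<^sub>R v) + (1 - t / t') *\<^sub>R 0 \<in> K"
    by (rule convexD[OF convex t(2) zero]) (use t \<open>t \<le> t'\<close> in auto)
  moreover have "(t / t') * inverse t = inverse t'" using t by (simp add: field_simps)
  ultimately show ?thesis by (simp only: scaleR_scaleR scaleR_zero_right add_0_right)
qed

lemma sublinear_minkowski_gauge: "sublinear (minkowski_gauge K)"
proof (rule sublinearI)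
  fix v w
  show "minkowski_gauge K (v + w) \<le> minkowski_gauge K v + minkowski_gauge K w"
    unfolding minkowski_gauge_def
  proof (rule cInf_le_cInf_add[OF gauge_set_nonempty gauge_set_nonempty bdd_below_gauge_set])
    fix t s assume "t \<in> {t. 0 < t \<and> inverse t *\<^sub>R v \<in> K}" "s \<in> {t. 0 < t \<and> inverse t *\<^sub>R w \<in> K}"
    then have ts: "0 < t" "inverse t *\<^sub>R v \<in> K" "0 < s" "inverse s *\<^sub>R w \<in> K" by auto
    have "(t / (t + s)) *\<^sub>R (inverse t *\<^sub>R v) + (s / (t + s)) *\<^sub>R (inverse s *\<^sub>R w) \<in> K"
      by (rule convexD[OF convex ts(2,4)]) (use ts in \<open>auto simp: add_divide_distrib[symmetric]\<close>)
    moreover have "(t / (t + s)) *\<^sub>R (inverse t *\<^sub>R v) + (s / (t + s)) *\<^sub>R (inverse s *\<^sub>R w)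
        = inverse (t + s) *\<^sub>R (v + w)"
      using ts by (simp add: field_simps scaleR_add_right)
    ultimately show "\<exists>u\<in>{t. 0 < t \<and> inverse t *\<^sub>R (v + w) \<in> K}. u \<le> t + s"
      using ts by (intro bexI[of _ "t + s"]) auto
  qed
next
  have "{t. 0 < t \<and> inverse t *\<^sub>R 0 \<in> K} = {0<..}" using zero by auto
  then show "minkowski_gauge K 0 = 0" unfolding minkowski_gauge_def by simp
next
  fix c :: real and v assume c: "0 < c"
  have "minkowski_gauge K (c *\<^sub>R v) / c \<le> minkowski_gauge K v"
    unfolding minkowski_gauge_def[of K v]
  proof (rule cInf_greatest[OF gauge_set_nonempty])
    fix t assume "t \<in> {t. 0 < t \<and> inverse t *\<^sub>R v \<in> K}"
    then have t: "0 < t" "inverse t *\<^sub>R v \<in> K" by auto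
    have eq: "inverse (c * t) *\<^sub>R (c *\<^sub>R v) = inverse t *\<^sub>R v" using c by (simp add: field_simps)
    have "c * t \<in> {t. 0 < t \<and> inverse t *\<^sub>R (c *\<^sub>R v) \<in> K}"
      using c t unfolding mem_Collect_eq eq by simp
    then have "minkowski_gauge K (c *\<^sub>R v) \<le> c * t"
      unfolding minkowski_gauge_def by (rule cInf_lower[OF _ bdd_below_gauge_set])
    then show "minkowski_gauge K (c *\<^sub>R v) / c \<le> t" using c by (simp add: divide_simps mult.commute)
  qed
  then show "minkowski_gauge K (c *\<^sub>R v) \<le> c * minkowski_gauge K v"
    using c by (simp add: divide_simps mult.commute)
qed

lemma minkowski_gauge_le_1: "v \<in> K \<Longrightarrow> minkowski_gauge K v \<le> 1"
  unfolding minkowski_gauge_def by (rule cInf_lower[OF _ bdd_below_gauge_set]) simp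

lemma minkowski_gauge_ge_1: "v \<notin> K \<Longrightarrow> 1 \<le> minkowski_gauge K v"
  unfolding minkowski_gauge_def
proof (rule cInf_greatest[OF gauge_set_nonempty], rule ccontr)
  fix t assume "v \<notin> K" "t \<in> {t. 0 < t \<and> inverse t *\<^sub>R v \<in> K}" "\<not> 1 \<le> t"
  then show False using gauge_set_mono[of t v 1] by simp
qed

end

text \<open>\<open>F\<close> is a linear minorant of the Minkowski gauge of \<open>S - C - (x0 - c0)\<close> that touches it at
  \<open>c0 - x0\<close>.\<close>
lemma linear_separation_absorbing:
  fixes S C N :: "'v::real_vector set"
  assumes S: "convex S" and C: "convex C" and disj: "S \<inter> C = {}" and c0: "c0 \<in> C"
    and N: "convex N" "0 \<in> N" "\<And>v. \<exists>t>0. t *\<^sub>R v \<in> N" and NO: "(+) x0 ` N \<subseteq> S"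
  obtains F :: "'v \<Rightarrow> real" and \<delta> :: real
  where "linear F" "\<And>v. v \<in> N \<Longrightarrow> F v \<le> 1" "0 < \<delta>" "\<And>c. c \<in> C \<Longrightarrow> F x0 + \<delta> \<le> F c"
proof -
  define z0 where "z0 = x0 - c0"
  define K where "K = (\<lambda>b. b - z0) ` (\<Union>u\<in>S. \<Union>c\<in>C. {u - c})"
  have memK: "v \<in> K \<longleftrightarrow> (\<exists>u\<in>S. \<exists>c\<in>C. v = u - c - z0)" for v unfolding K_def by auto
  have NK: "N \<subseteq> K"
  proof
    fix v assume "v \<in> N"
    then have "x0 + v \<in> S" using NO by blast
    moreover have "v = (x0 + v) - c0 - z0" by (simp add: z0_def)
    ultimately show "v \<in> K" using c0 unfolding memK by blast
  qed
  have K: "convex K" "0 \<in> K" "\<And>v. \<exists>t>0. t *\<^sub>R v \<in> K"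
    unfolding K_def using convex_translation_subtract[OF convex_differences[OF S C]] apply blast
    using NK N(2,3) unfolding K_def by (blast, meson subsetD)
  have "- z0 \<notin> K"
  proof
    assume "- z0 \<in> K"
    then obtain u c where "u \<in> S" "c \<in> C" "- z0 = u - c - z0" unfolding memK by blast
    then show False using disj by (auto simp: algebra_simps)
  qed
  obtain F where F: "linear F" "F \<le> minkowski_gauge K" "F (- z0) = minkowski_gauge K (- z0)"
    using sublinear_linear_minorant[OF sublinear_minkowski_gauge[OF K]] by blast
  have F1: "1 \<le> F (- z0)" using F(3) minkowski_gauge_ge_1[OF K \<open>- z0 \<notin> K\<close>] by simp
  have FK: "F v \<le> 1" if "v \<in> K" for v
    using le_funD[OF F(2), of v] minkowski_gauge_le_1[OF K that] by linarith
  obtain s where s: "0 < s" "s *\<^sub>R (- z0) \<in> N" using N(3) by blast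
  have "F x0 + s \<le> F c" if c: "c \<in> C" for c
  proof -
    have "x0 + s *\<^sub>R (- z0) \<in> S" using NO s(2) by blast
    then have "F ((x0 + s *\<^sub>R (- z0)) - c - z0) \<le> 1" using c by (intro FK) (auto simp: memK)
    then have "F x0 + s * F (- z0) - F c + F (- z0) \<le> 1" using F(1) by (simp add: linear_diff linear_add linear_scale linear_neg)
    moreover have "s \<le> s * F (- z0)" using F1 s(1) by simp
    ultimately show ?thesis using F1 by linarith
  qed
  then show ?thesis using F(1) FK NK s(1) by (intro that) auto
qed

section \<open>Separation in locally convex spaces\<close>

lemma linear_Pair_real:
  fixes F :: "'x::real_vector \<times> real \<Rightarrow> real"
  assumes "linear F"
  shows "F (x, m) = F (x, 0) + m * F (0, 1)" and "linear (\<lambda>x. F (x, 0))"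
proof -
  have "F (x, m) = F ((x, 0) + m *\<^sub>R (0, 1))" by simp
  also have "\<dots> = F (x, 0) + m * F (0, 1)" by (simp only: linear_add[OF assms] linear_scale[OF assms] real_scaleR_def)
  finally show "F (x, m) = F (x, 0) + m * F (0, 1)" .
  show "linear (\<lambda>x. F (x, 0))"
  proof (rule linearI)
    fix x y :: 'x and c :: real
    show "F (x + y, 0) = F (x, 0) + F (y, 0)" using linear_add[OF assms, of "(x, 0)" "(y, 0)"] by simp
    show "F (c *\<^sub>R x, 0) = c *\<^sub>R F (x, 0)" using linear_scale[OF assms, of c "(x, 0)"] by simp
  qed
qed

context
  fixes ty :: "'x::{real_vector,topological_space} itself"
  assumes tvs: "tvs TYPE('x)"
begin

lemma tvs_continuous_on_scaleR:
  fixes g :: "'a::topological_space \<Rightarrow> 'x"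
  assumes "continuous_on S f" "continuous_on S g"
  shows "continuous_on S (\<lambda>u. f u *\<^sub>R g u)"
proof -
  have "continuous_on UNIV (\<lambda>p::real \<times> 'x. fst p *\<^sub>R snd p)" using tvs unfolding tvs_def by blast
  from continuous_on_compose2[OF this continuous_on_Pair[OF assms]] show ?thesis by simp
qed

lemma tvs_continuous_on_add:
  fixes f g :: "'a::topological_space \<Rightarrow> 'x"
  assumes "continuous_on S f" "continuous_on S g"
  shows "continuous_on S (\<lambda>u. f u + g u)"
proof -
  have "continuous_on UNIV (\<lambda>p::'x \<times> 'x. fst p + snd p)" using tvs unfolding tvs_def by blast
  from continuous_on_compose2[OF this continuous_on_Pair[OF assms]] show ?thesis by simp
qed

lemma tvs_open_translation:
  assumes "open (U::'x set)" shows "open ((+) a ` U)"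
proof -
  have "(+) a ` U = (\<lambda>u. - a + u) -` U" by (force simp: algebra_simps)
  moreover have "open ((\<lambda>u. - a + u) -` U)"
    by (rule open_vimage[OF assms tvs_continuous_on_add[OF continuous_on_const continuous_on_id]])
  ultimately show ?thesis by simp
qed

lemma tvs_open_scaling:
  assumes "open (U::'x set)" "c \<noteq> 0" shows "open ((\<lambda>u. c *\<^sub>R u) ` U)"
proof -
  have "(\<lambda>u. c *\<^sub>R u) ` U = (\<lambda>u. inverse c *\<^sub>R u) -` U"
  proof (intro set_eqI iffI)
    fix u assume "u \<in> (\<lambda>u. inverse c *\<^sub>R u) -` U"
    moreover have "u = c *\<^sub>R (inverse c *\<^sub>R u)" using assms(2) by simp
    ultimately show "u \<in> (\<lambda>u. c *\<^sub>R u) ` U" by blast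
  qed (use assms(2) in auto)
  moreover have "open ((\<lambda>u. inverse c *\<^sub>R u) -` U)"
    by (rule open_vimage[OF assms(1) tvs_continuous_on_scaleR[OF continuous_on_const continuous_on_id]])
  ultimately show ?thesis by simp
qed

lemma tvs_convex_absorbing:
  assumes "open (U::'x set)" "0 \<in> U" "convex U"
  obtains t where "0 < t" "\<And>s. 0 \<le> s \<Longrightarrow> s \<le> t \<Longrightarrow> s *\<^sub>R v \<in> U"
proof -
  have "open ((\<lambda>s::real. s *\<^sub>R v) -` U)"
    using open_vimage[OF assms(1) tvs_continuous_on_scaleR[OF continuous_on_id continuous_on_const]] .
  moreover have "0 \<in> (\<lambda>s::real. s *\<^sub>R v) -` U" using assms(2) by simp
  ultimately obtain e where e: "0 < e" "\<And>s. dist s 0 < e \<Longrightarrow> s *\<^sub>R v \<in> U"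
    unfolding open_dist by blast
  have "s *\<^sub>R v \<in> U" if "0 \<le> s" "s \<le> e / 2" for s
  proof -
    have "(2 * s / e) *\<^sub>R ((e / 2) *\<^sub>R v) + (1 - 2 * s / e) *\<^sub>R 0 \<in> U"
      by (rule convexD[OF assms(3) e(2) assms(2)]) (use e that in \<open>auto simp: field_simps\<close>)
    then show ?thesis using e by simp
  qed
  then show ?thesis using e(1) by (intro that[of "e / 2"]) auto
qed

text \<open>Boundedness on a neighbourhood of \<open>0\<close> gives continuity: \<open>\<phi>\<close> varies by less than \<open>\<epsilon>\<close> on the
  neighbourhood \<open>x + (\<epsilon>/2) W\<close> of \<open>x\<close>.\<close>
lemma tvs_linear_continuous_on:
  fixes \<phi> :: "'x \<Rightarrow> real"
  assumes lin: "linear \<phi>" and W: "open W" "0 \<in> W" and bounded: "\<And>w. w \<in> W \<Longrightarrow> \<bar>\<phi> w\<bar> \<le> 1"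
  shows "continuous_on UNIV \<phi>"
proof -
  have "open (\<phi> -` S)" if S: "open S" for S
    unfolding open_subopen[of "\<phi> -` S"]
  proof
    fix x assume "x \<in> \<phi> -` S"
    then obtain \<epsilon> where \<epsilon>: "0 < \<epsilon>" "\<And>y. dist y (\<phi> x) < \<epsilon> \<Longrightarrow> y \<in> S"
      using S unfolding open_dist by auto
    define T where "T = (+) x ` ((\<lambda>u. (\<epsilon> / 2) *\<^sub>R u) ` W)"
    have "open T" unfolding T_def using tvs_open_translation tvs_open_scaling W \<epsilon> by simp
    moreover have "x \<in> T" unfolding T_def using W(2) by force
    moreover have "T \<subseteq> \<phi> -` S"
    proof
      fix y assume "y \<in> T"
      then obtain w where w: "w \<in> W" "y = x + (\<epsilon> / 2) *\<^sub>R w" unfolding T_def by blast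
      then have "\<phi> y = \<phi> x + (\<epsilon> / 2) * \<phi> w" using lin by (simp add: linear_add linear_scale)
      moreover have "\<bar>(\<epsilon> / 2) * \<phi> w\<bar> \<le> \<epsilon> / 2" using bounded[OF w(1)] \<epsilon> by (simp add: abs_mult)
      ultimately show "y \<in> \<phi> -` S" using \<epsilon> by (simp add: dist_real_def)
    qed
    ultimately show "\<exists>T. open T \<and> x \<in> T \<and> T \<subseteq> \<phi> -` S" by blast
  qed
  then show ?thesis using continuous_on_open_vimage[of UNIV \<phi>] by simp
qed

lemma locally_convex_symmetric_nhd:
  assumes lc: "locally_convex TYPE('x)" and U: "open (U::'x set)" "0 \<in> U"
  obtains W where "open W" "convex W" "0 \<in> W" "W \<subseteq> U" "\<And>w. w \<in> W \<Longrightarrow> - w \<in> W"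
proof -
  obtain V where V: "open V" "convex V" "0 \<in> V" "V \<subseteq> U"
    using lc U unfolding locally_convex_def by blast
  define W where "W = V \<inter> uminus ` V"
  have "uminus ` V = (\<lambda>u. (- 1) *\<^sub>R u) ` V" by simp
  then have "open W" unfolding W_def using tvs_open_scaling[OF V(1), of "- 1"] V(1) by (simp add: open_Int)
  moreover have "convex W" unfolding W_def using convex_negations[OF V(2)] V(2) by (simp add: convex_Int)
  moreover have "0 \<in> W" "W \<subseteq> U" unfolding W_def using V(3,4) by (force, blast)
  moreover have "- w \<in> W" if "w \<in> W" for w using that unfolding W_def by (auto simp: image_iff)
  ultimately show ?thesis by (rule that)
qed

lemma tvs_separation_closed_convex:
  assumes lc: "locally_convex TYPE('x)"
    and C: "convex (C :: ('x \<times> real) set)" "closed C" "c0 \<in> C" and notin: "(x0, r0) \<notin> C"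
  obtains \<phi> :: "'x \<Rightarrow> real" and a \<delta> :: real
  where "linear \<phi>" "continuous_on UNIV \<phi>" "0 < \<delta>"
    "\<And>Z m. (Z, m) \<in> C \<Longrightarrow> \<phi> x0 + a * r0 + \<delta> \<le> \<phi> Z + a * m"
proof -
  have "(x0, r0) \<in> - C" using notin by simp
  then obtain A B where AB: "open A" "open B" "(x0, r0) \<in> A \<times> B" "A \<times> B \<subseteq> - C"
    by (rule open_prod_elim[OF C(2)[unfolded closed_def]])
  have A0: "open ((+) (- x0) ` A)" "0 \<in> (+) (- x0) ` A"
    by (rule tvs_open_translation[OF AB(1)]) (use AB(3) in \<open>auto intro: image_eqI[of _ _ x0]\<close>)
  obtain W where W: "open W" "convex W" "0 \<in> W" "W \<subseteq> (+) (- x0) ` A" "\<And>w. w \<in> W \<Longrightarrow> - w \<in> W"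
    using locally_convex_symmetric_nhd[OF lc A0] by blast
  obtain e where e: "0 < e" "ball r0 e \<subseteq> B" using AB(2,3) open_contains_ball by blast
  define N where "N = W \<times> ball (0::real) e"
  have N: "convex N" "0 \<in> N" using W e unfolding N_def by (auto intro: convex_Times simp: zero_prod_def)
  have absN: "\<exists>t>0. t *\<^sub>R v \<in> N" for v :: "'x \<times> real"
  proof -
    obtain t1 where t1: "0 < t1" "\<And>s. 0 \<le> s \<Longrightarrow> s \<le> t1 \<Longrightarrow> s *\<^sub>R fst v \<in> W"
      using tvs_convex_absorbing[OF W(1,3,2)] by metis
    define t where "t = min t1 (e / (2 * (\<bar>snd v\<bar> + 1)))"
    have t: "0 < t" "t \<le> t1" using t1 e by (auto simp: t_def)
    have "t \<le> e / (2 * (\<bar>snd v\<bar> + 1))" by (simp add: t_def)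
    then have "t * \<bar>snd v\<bar> + t \<le> e / 2" by (simp add: field_simps)
    then have "\<bar>t * snd v\<bar> < e" using t(1) e(1) by (simp add: abs_mult)
    then show ?thesis using t t1(2)[of t] unfolding N_def by (intro exI[of _ t]) (cases v, auto)
  qed
  have "(+) (x0, r0) ` N \<subseteq> - C"
  proof
    fix p assume "p \<in> (+) (x0, r0) ` N"
    then obtain w m where "w \<in> W" "\<bar>m\<bar> < e" "p = (x0 + w, r0 + m)" unfolding N_def by force
    then have "p \<in> A \<times> B" using W(4) e(2) by (force simp: dist_real_def)
    then show "p \<in> - C" using AB(4) by blast
  qed
  then have "(+) (x0, r0) ` N \<inter> C = {}" by blast
  then obtain F :: "'x \<times> real \<Rightarrow> real" and \<delta>
    where F: "linear F" "\<And>v. v \<in> N \<Longrightarrow> F v \<le> 1" "0 < \<delta>" "\<And>c. c \<in> C \<Longrightarrow> F (x0, r0) + \<delta> \<le> F c"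
    using linear_separation_absorbing[OF convex_translation[OF N(1)] C(1) _ C(3) N absN subset_refl] by blast
  note decomp = linear_Pair_real[OF F(1)]
  have "\<bar>F (w, 0)\<bar> \<le> 1" if "w \<in> W" for w
    using F(2)[of "(w, 0)"] F(2)[of "(- w, 0)"] W(5)[OF that] e that linear_neg[OF decomp(2), of w]
    unfolding N_def by auto
  then have cont: "continuous_on UNIV (\<lambda>x. F (x, 0))" by (rule tvs_linear_continuous_on[OF decomp(2) W(1,3)])
  have sep: "F (x0, 0) + F (0, 1) * r0 + \<delta> \<le> F (Z, 0) + F (0, 1) * m" if "(Z, m) \<in> C" for Z m
    using F(4)[OF that] decomp(1)[of x0 r0] decomp(1)[of Z m] by (simp add: mult.commute)
  show ?thesis by (rule that[OF decomp(2) cont F(3) sep])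
qed

end

section \<open>Dual representation of the risk measure\<close>

lemma lsc_closed_epigraph:
  fixes f :: "'a::topological_space \<Rightarrow> ereal"
  assumes "lsc f"
  shows "closed {(X, m::real). f X \<le> ereal m}"
  unfolding closed_def open_subopen[of "- {(X, m::real). f X \<le> ereal m}"]
proof
  fix p assume "p \<in> - {(X, m::real). f X \<le> ereal m}"
  then obtain X m where p: "p = (X, m)" "ereal m < f X" by (cases p) auto
  then obtain c where c: "ereal m < ereal c" "ereal c < f X" using ereal_dense2 by blast
  have "\<exists>U. open U \<and> X \<in> U \<and> (\<forall>y\<in>U. ereal c < f y)"
    by (rule assms[unfolded lsc_def, rule_format, OF c(2)])
  then obtain U where U: "open U" "X \<in> U" "\<And>y. y \<in> U \<Longrightarrow> ereal c < f y" by blast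
  have "(Y, n) \<notin> {(X, m::real). f X \<le> ereal m}" if "Y \<in> U" "n < c" for Y n
  proof -
    have "ereal n < ereal c" using that(2) by simp
    then have "ereal n < f Y" using U(3)[OF that(1)] by (rule less_trans)
    then show ?thesis by simp
  qed
  then have "U \<times> {..<c} \<subseteq> - {(X, m::real). f X \<le> ereal m}" by auto
  moreover have "open (U \<times> {..<c})" using U(1) by (intro open_Times) auto
  moreover have "p \<in> U \<times> {..<c}" using p(1) U(2) c(1) by simp
  ultimately show "\<exists>T. open T \<and> p \<in> T \<and> T \<subseteq> - {(X, m::real). f X \<le> ereal m}" by blast
qed

lemma linear_nonneg_on_cone:
  fixes \<psi> :: "'a::real_vector \<Rightarrow> real"
  assumes "linear \<psi>" "convex_cone K" and bounded: "\<And>W. W \<in> K \<Longrightarrow> b \<le> \<psi> W" and "W \<in> K"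
  shows "0 \<le> \<psi> W"
proof (rule ccontr)
  assume neg: "\<not> 0 \<le> \<psi> W"
  define t where "t = (\<bar>b\<bar> + 1) / (- \<psi> W)"
  have "0 \<le> t" using neg unfolding t_def by (simp add: divide_simps)
  then have "b \<le> \<psi> (t *\<^sub>R W)" using assms by (intro bounded convex_cone_scaleR)
  moreover have "\<psi> (t *\<^sub>R W) = t * \<psi> W" using linear_scale[OF assms(1), of t W] by simp
  moreover have "t * \<psi> W = - (\<bar>b\<bar> + 1)" using neg unfolding t_def by simp
  ultimately show False by linarith
qed

lemma linear_sigmaA_nonneg:
  assumes "linear \<psi>" "convex_cone K" "- \<infinity> < sigmaA K \<psi>" "W \<in> K"
  shows "0 \<le> \<psi> W"
proof -
  obtain b where b: "ereal b < sigmaA K \<psi>" using ereal_dense2[OF assms(3)] by blast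
  have "b \<le> \<psi> V" if "V \<in> K" for V
  proof -
    have "sigmaA K \<psi> \<le> ereal (\<psi> V)" unfolding sigmaA_def using that by (rule INF_lower)
    then have "ereal b \<le> ereal (\<psi> V)" using b by (meson less_imp_le order_trans)
    then show ?thesis by simp
  qed
  then show ?thesis using linear_nonneg_on_cone assms(1,2,4) by blast
qed

lemma topdual_lincomb:
  assumes "\<psi> \<in> topdual TYPE('x::{real_vector,topological_space})" "\<phi> \<in> topdual TYPE('x)"
  shows "(\<lambda>X. a * \<psi> X + b * \<phi> X) \<in> topdual TYPE('x)"
proof -
  have "linear \<psi>" "linear \<phi>" "continuous_on UNIV \<psi>" "continuous_on UNIV \<phi>"
    using assms unfolding topdual_def by auto
  moreover have "linear (\<lambda>X. a * \<psi> X + b * \<phi> X)"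
    by (rule linearI) (use calculation in \<open>simp_all add: linear_add linear_scale algebra_simps\<close>)
  moreover have "continuous_on UNIV (\<lambda>X. a * \<psi> X + b * \<phi> X)"
    using calculation(3,4) by (intro continuous_on_add continuous_on_mult_left)
  ultimately show ?thesis unfolding topdual_def by blast
qed

lemma topdual_scale: "\<psi> \<in> topdual TYPE('x::{real_vector,topological_space}) \<Longrightarrow> (\<lambda>X. a * \<psi> X) \<in> topdual TYPE('x)"
  using topdual_lincomb[of \<psi> \<psi> a 0] by simp

lemma locally_convex_imp_tvs: "locally_convex TYPE('x::{real_vector,topological_space}) \<Longrightarrow> tvs TYPE('x)"
  unfolding locally_convex_def by blast

locale risk_duality =
  fixes P :: "(real^'n) set" and V0 :: "real^'n \<Rightarrow> real"
    and V1 :: "real^'n \<Rightarrow> 'x::{real_vector,topological_space}" and A :: "'x set"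
  assumes locally_convex: "locally_convex TYPE('x)"
    and P0: "0 \<in> P" and V0_0: "V0 0 = 0" and V1_0: "V1 0 = 0" and A_cone: "convex_cone A"
    and proper: "proper_fun (rho P V0 V1 A)"
    and convex: "convex_efun (rho P V0 V1 A)"
    and lsc: "lsc (rho P V0 V1 A)"
begin

abbreviation \<rho> where "\<rho> \<equiv> rho P V0 V1 A"

lemma rho_le: "x \<in> P \<Longrightarrow> X + V1 x \<in> A \<Longrightarrow> \<rho> X \<le> ereal (V0 x)"
  unfolding rho_def by (rule INF_lower) auto

lemma rho_greatest: "(\<And>x. x \<in> P \<Longrightarrow> X + V1 x \<in> A \<Longrightarrow> c \<le> ereal (V0 x)) \<Longrightarrow> c \<le> \<rho> X"
  unfolding rho_def by (rule INF_greatest) auto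

lemma rho_zero_le: "\<rho> 0 \<le> 0"
  using rho_le[OF P0, of 0] V0_0 V1_0 convex_cone_contains_0[OF A_cone] by (simp add: zero_ereal_def)

lemma rho_not_MInf: "\<rho> X \<noteq> - \<infinity>"
  using proper unfolding proper_fun_def by blast

lemma rho_finite_point: obtains Z m where "\<rho> Z = ereal m"
proof -
  obtain Z where "\<rho> Z \<noteq> \<infinity>" using proper unfolding proper_fun_def by blast
  with rho_not_MInf[of Z] that show ?thesis by (cases "\<rho> Z") auto
qed

lemma sigmaPV_le_0: "\<psi> \<in> topdual TYPE('x) \<Longrightarrow> sigmaPV P V0 V1 \<psi> \<le> 0"
  unfolding sigmaPV_def topdual_def using P0 V0_0 V1_0
  by (intro INF_lower2[of 0]) (auto simp: linear_0 zero_ereal_def)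

lemma DD_topdual: "\<psi> \<in> DD P V0 V1 A \<Longrightarrow> \<psi> \<in> topdual TYPE('x)"
  unfolding DD_def by blast

lemma DD_linear: "\<psi> \<in> DD P V0 V1 A \<Longrightarrow> linear \<psi>"
  unfolding DD_def topdual_def by blast

lemma DD_sigmaPV_real:
  assumes "\<psi> \<in> DD P V0 V1 A" obtains s where "sigmaPV P V0 V1 \<psi> = ereal s"
  using assms sigmaPV_le_0[OF DD_topdual[OF assms]] unfolding DD_def
  by (cases "sigmaPV P V0 V1 \<psi>") auto

lemma DD_nonneg: "\<psi> \<in> DD P V0 V1 A \<Longrightarrow> W \<in> A \<Longrightarrow> 0 \<le> \<psi> W"
  using linear_sigmaA_nonneg[OF DD_linear A_cone] unfolding DD_def by blast

lemma sigmaPV_le: "x \<in> P \<Longrightarrow> sigmaPV P V0 V1 \<psi> \<le> ereal (V0 x - \<psi> (V1 x))"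
  unfolding sigmaPV_def by (rule INF_lower)

lemma weak_duality:
  assumes \<psi>: "\<psi> \<in> DD P V0 V1 A"
  shows "sigmaPV P V0 V1 \<psi> - ereal (\<psi> X) \<le> \<rho> X"
proof -
  obtain s where s: "sigmaPV P V0 V1 \<psi> = ereal s" using DD_sigmaPV_real[OF \<psi>] .
  have "ereal (s - \<psi> X) \<le> \<rho> X"
  proof (rule rho_greatest)
    fix x assume x: "x \<in> P" "X + V1 x \<in> A"
    have "s \<le> V0 x - \<psi> (V1 x)" using sigmaPV_le[OF x(1), of \<psi>] s by simp
    moreover have "0 \<le> \<psi> (X + V1 x)" by (rule DD_nonneg[OF \<psi> x(2)])
    ultimately show "ereal (s - \<psi> X) \<le> ereal (V0 x)" using DD_linear[OF \<psi>] by (simp add: linear_add)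
  qed
  then show ?thesis using s by simp
qed

text \<open>A continuous affine minorant of \<open>\<rho>\<close> with slope \<open>-\<psi>\<close> yields an element of \<open>\<D>\<close>: testing the
  minorant at \<open>W - V1 x\<close> with \<open>W \<in> A\<close> and \<open>x \<in> P\<close> bounds \<open>\<psi>\<close> below on \<open>A\<close> and \<open>V0 - \<psi> \<circ> V1\<close> below on \<open>P\<close>.\<close>
lemma minorant_in_DD:
  assumes \<psi>: "\<psi> \<in> topdual TYPE('x)" and minorant: "\<And>Z. ereal (c - \<psi> Z) \<le> \<rho> Z"
  shows "\<psi> \<in> DD P V0 V1 A" and "ereal c \<le> sigmaPV P V0 V1 \<psi>"
proof -
  have lin: "linear \<psi>" using \<psi> unfolding topdual_def by blast
  have key: "c - \<psi> W + \<psi> (V1 x) \<le> V0 x" if "W \<in> A" "x \<in> P" for W x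
  proof -
    have "\<rho> (W - V1 x) \<le> ereal (V0 x)" by (rule rho_le[OF that(2)]) (simp add: that(1))
    then have "ereal (c - \<psi> (W - V1 x)) \<le> ereal (V0 x)" using minorant by (rule order_trans[rotated])
    then show ?thesis using lin by (simp add: linear_diff)
  qed
  have "c \<le> \<psi> W" if "W \<in> A" for W using key[OF that P0] V0_0 V1_0 lin by (simp add: linear_0)
  then have "0 \<le> \<psi> W" if "W \<in> A" for W by (rule linear_nonneg_on_cone[OF lin A_cone _ that])
  then have "0 \<le> sigmaA A \<psi>" unfolding sigmaA_def by (intro INF_greatest) auto
  moreover show "ereal c \<le> sigmaPV P V0 V1 \<psi>"
    unfolding sigmaPV_def
  proof (rule INF_greatest)
    fix x assume "x \<in> P"
    then have "c + \<psi> (V1 x) \<le> V0 x"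
      using key[OF convex_cone_contains_0[OF A_cone]] lin by (simp add: linear_0)
    then show "ereal c \<le> ereal (V0 x - \<psi> (V1 x))" by simp
  qed
  ultimately show "\<psi> \<in> DD P V0 V1 A" using \<psi> unfolding DD_def
    by (auto intro: order.strict_trans2[of _ 0] order.strict_trans2[of _ "ereal c"])
qed

lemma epigraph_separation:
  assumes "ereal r < \<rho> X0"
  obtains \<phi> :: "'x \<Rightarrow> real" and \<delta> a :: real
  where "linear \<phi>" "continuous_on UNIV \<phi>" "0 < \<delta>"
    "\<And>Z m. \<rho> Z \<le> ereal m \<Longrightarrow> \<phi> X0 + a * r + \<delta> \<le> \<phi> Z + a * m"
proof -
  obtain Z1 m1 where "\<rho> Z1 = ereal m1" by (rule rho_finite_point)
  then have "(Z1, m1) \<in> {(X, m::real). \<rho> X \<le> ereal m}" by simp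
  moreover have "(X0, r) \<notin> {(X, m::real). \<rho> X \<le> ereal m}" using assms by simp
  ultimately show ?thesis
  proof (rule tvs_separation_closed_convex[OF locally_convex_imp_tvs[OF locally_convex] locally_convex
        convex[unfolded convex_efun_def] lsc_closed_epigraph[OF lsc]])
    fix \<phi> :: "'x \<Rightarrow> real" and a \<delta> :: real
    assume "linear \<phi>" "continuous_on UNIV \<phi>" "0 < \<delta>"
      "\<And>Z m. (Z, m) \<in> {(X, m::real). \<rho> X \<le> ereal m} \<Longrightarrow> \<phi> X0 + a * r + \<delta> \<le> \<phi> Z + a * m"
    then show thesis by (intro that[of \<phi> \<delta> a]) auto
  qed
qed

lemma epigraph_separation_slope_nonneg:
  assumes "\<And>Z m. \<rho> Z \<le> ereal m \<Longrightarrow> \<phi> X0 + a * r + \<delta> \<le> \<phi> Z + a * m"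
  shows "0 \<le> a"
proof (rule ccontr)
  assume a: "\<not> 0 \<le> a"
  obtain Z1 m1 where Z1: "\<rho> Z1 = ereal m1" by (rule rho_finite_point)
  define k where "k = (\<bar>\<phi> Z1 + a * m1 - \<phi> X0 - a * r - \<delta>\<bar> + 1) / (- a)"
  have "0 \<le> k" using a unfolding k_def by (simp add: divide_simps)
  then have "\<phi> X0 + a * r + \<delta> \<le> \<phi> Z1 + a * (m1 + k)" using Z1 by (intro assms) simp
  moreover have "a * k = - (\<bar>\<phi> Z1 + a * m1 - \<phi> X0 - a * r - \<delta>\<bar> + 1)" using a unfolding k_def by simp
  moreover have "a * (m1 + k) = a * m1 + a * k" by (rule distrib_left)
  ultimately show False using abs_ge_self[of "\<phi> Z1 + a * m1 - \<phi> X0 - a * r - \<delta>"] by linarith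
qed

lemma nonvertical_separation_minorant:
  assumes \<phi>: "linear \<phi>" "continuous_on UNIV \<phi>" and a: "0 < a"
    and sep: "\<And>Z m. \<rho> Z \<le> ereal m \<Longrightarrow> \<phi> X0 + a * r + \<delta> \<le> \<phi> Z + a * m"
  shows "(\<lambda>Z. inverse a * \<phi> Z) \<in> topdual TYPE('x)"
    and "\<And>Z. ereal ((\<phi> X0 + \<delta>) / a + r - inverse a * \<phi> Z) \<le> \<rho> Z"
proof -
  show "(\<lambda>Z. inverse a * \<phi> Z) \<in> topdual TYPE('x)"
    by (rule topdual_scale) (use \<phi> in \<open>simp add: topdual_def\<close>)
  fix Z show "ereal ((\<phi> X0 + \<delta>) / a + r - inverse a * \<phi> Z) \<le> \<rho> Z"
  proof (cases "\<rho> Z")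
    case (real m)
    then have "\<phi> X0 + a * r + \<delta> \<le> \<phi> Z + a * m" using sep by simp
    then have "(\<phi> X0 + a * r + \<delta> - \<phi> Z) / a \<le> m" using a by (simp add: pos_divide_le_eq mult.commute)
    moreover have "(\<phi> X0 + \<delta>) / a + r - inverse a * \<phi> Z = (\<phi> X0 + a * r + \<delta> - \<phi> Z) / a"
      using a by (simp add: field_simps)
    ultimately have "(\<phi> X0 + \<delta>) / a + r - inverse a * \<phi> Z \<le> m" by simp
    then show ?thesis using real by simp
  qed (use rho_not_MInf in auto)
qed

lemma exists_affine_minorant:
  obtains \<psi> c where "\<psi> \<in> topdual TYPE('x)" "\<And>Z. ereal (c - \<psi> Z) \<le> \<rho> Z"
proof -
  obtain Z1 m1 where Z1: "\<rho> Z1 = ereal m1" by (rule rho_finite_point)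
  then have "ereal (m1 - 1) < \<rho> Z1" by simp
  then obtain \<phi> a \<delta> where sep: "linear \<phi>" "continuous_on UNIV \<phi>" "0 < \<delta>"
    "\<And>Z m. \<rho> Z \<le> ereal m \<Longrightarrow> \<phi> Z1 + a * (m1 - 1) + \<delta> \<le> \<phi> Z + a * m"
    using epigraph_separation by blast
  have "\<phi> Z1 + a * (m1 - 1) + \<delta> \<le> \<phi> Z1 + a * m1" using sep(4) Z1 by simp
  then have "0 < a" using sep(3) by (simp add: algebra_simps)
  note minorant = nonvertical_separation_minorant[OF sep(1,2) this sep(4)]
  show ?thesis by (rule that[OF minorant(1) minorant(2)])
qed

lemma DD_nonempty: "DD P V0 V1 A \<noteq> {}"
proof -
  obtain \<psi> c where "\<psi> \<in> topdual TYPE('x)" "\<And>Z. ereal (c - \<psi> Z) \<le> \<rho> Z"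
    using exists_affine_minorant by blast
  then show ?thesis using minorant_in_DD(1) by blast
qed

text \<open>A vertical separating hyperplane (\<open>a = 0\<close>) is tilted by adding a large multiple of it to
  some affine minorant.\<close>
lemma exists_affine_minorant_above:
  assumes r: "ereal r < \<rho> X0"
  obtains \<psi> c where "\<psi> \<in> topdual TYPE('x)" "\<And>Z. ereal (c - \<psi> Z) \<le> \<rho> Z" "r < c - \<psi> X0"
proof -
  obtain \<phi> a \<delta> where sep: "linear \<phi>" "continuous_on UNIV \<phi>" "0 < \<delta>"
    "\<And>Z m. \<rho> Z \<le> ereal m \<Longrightarrow> \<phi> X0 + a * r + \<delta> \<le> \<phi> Z + a * m"
    using epigraph_separation[OF r] by blast
  have \<phi>: "\<phi> \<in> topdual TYPE('x)" using sep(1,2) unfolding topdual_def by blast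
  have "0 \<le> a" using sep(4) by (rule epigraph_separation_slope_nonneg)
  then consider "0 < a" | "a = 0" by linarith
  then show ?thesis
  proof cases
    case 1
    note minorant = nonvertical_separation_minorant[OF sep(1,2) 1 sep(4)]
    have "r < (\<phi> X0 + \<delta>) / a + r - inverse a * \<phi> X0" using 1 sep(3) by (simp add: field_simps)
    then show ?thesis using that minorant by blast
  next
    case 2
    obtain \<psi>1 c1 where \<psi>1: "\<psi>1 \<in> topdual TYPE('x)" "\<And>Z. ereal (c1 - \<psi>1 Z) \<le> \<rho> Z"
      using exists_affine_minorant by blast
    define k where "k = (\<bar>r - (c1 - \<psi>1 X0)\<bar> + 1) / \<delta>"
    have k: "0 \<le> k" "k * \<delta> = \<bar>r - (c1 - \<psi>1 X0)\<bar> + 1" using sep(3) unfolding k_def by auto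
    have minorant: "ereal (c1 + k * (\<phi> X0 + \<delta>) - (1 * \<psi>1 Z + k * \<phi> Z)) \<le> \<rho> Z" for Z
    proof (cases "\<rho> Z")
      case (real m)
      then have "\<phi> X0 + \<delta> \<le> \<phi> Z" using sep(4)[of Z m] 2 by simp
      then have "k * (\<phi> X0 + \<delta>) \<le> k * \<phi> Z" using k(1) by (rule mult_left_mono)
      moreover have "c1 - \<psi>1 Z \<le> m" using \<psi>1(2)[of Z] real by simp
      ultimately show ?thesis using real by simp
    qed (use rho_not_MInf in auto)
    have "r < c1 - \<psi>1 X0 + k * \<delta>" using k(2) abs_ge_self[of "r - (c1 - \<psi>1 X0)"] by linarith
    then have "r < c1 + k * (\<phi> X0 + \<delta>) - (1 * \<psi>1 X0 + k * \<phi> X0)" by (simp add: algebra_simps)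
    then show ?thesis by (rule that[OF topdual_lincomb[OF \<psi>1(1) \<phi>] minorant])
  qed
qed

lemma strong_duality:
  assumes "ereal r < \<rho> X0"
  obtains \<psi> where "\<psi> \<in> DD P V0 V1 A" "ereal r < sigmaPV P V0 V1 \<psi> - ereal (\<psi> X0)"
proof -
  obtain \<psi> c where \<psi>: "\<psi> \<in> topdual TYPE('x)" "\<And>Z. ereal (c - \<psi> Z) \<le> \<rho> Z" "r < c - \<psi> X0"
    using exists_affine_minorant_above[OF assms] by blast
  note DD = minorant_in_DD[OF \<psi>(1,2)]
  obtain s where s: "sigmaPV P V0 V1 \<psi> = ereal s" using DD_sigmaPV_real[OF DD(1)] .
  then have "ereal r < sigmaPV P V0 V1 \<psi> - ereal (\<psi> X0)" using DD(2) \<psi>(3) by simp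
  with DD(1) that show ?thesis by blast
qed

theorem rho_eq_SUP_DD: "\<rho> X = (SUP \<psi>\<in>DD P V0 V1 A. sigmaPV P V0 V1 \<psi> - ereal (\<psi> X))"
  (is "_ = ?S")
proof (rule antisym)
  show "?S \<le> \<rho> X" by (rule SUP_least) (rule weak_duality)
  show "\<rho> X \<le> ?S"
  proof (rule ccontr)
    assume "\<not> \<rho> X \<le> ?S"
    then have "?S < \<rho> X" by simp
    then obtain r where r: "?S < ereal r" "ereal r < \<rho> X" using ereal_dense2 by blast
    obtain \<psi> where \<psi>: "\<psi> \<in> DD P V0 V1 A" "ereal r < sigmaPV P V0 V1 \<psi> - ereal (\<psi> X)"
      by (rule strong_duality[OF r(2)])
    have "sigmaPV P V0 V1 \<psi> - ereal (\<psi> X) \<le> ?S" using \<psi>(1) by (rule SUP_upper)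
    with \<psi>(2) r(1) show False by simp
  qed
qed

end

section \<open>Separation of the points of the acceptance set\<close>

lemma asym_cone_sequentially:
  fixes a :: "nat \<Rightarrow> 'a::{real_vector,topological_space}"
  assumes "\<And>k. a k \<in> C" "\<And>k. 0 \<le> t k" "t \<longlonglongrightarrow> 0" "(\<lambda>k. t k *\<^sub>R a k) \<longlonglongrightarrow> X"
  shows "X \<in> asym_cone C"
  unfolding asym_cone_def
proof (intro CollectI exI[of _ "filtermap (\<lambda>k. (a k, t k)) sequentially"] conjI)
  show "filtermap (\<lambda>k. (a k, t k)) sequentially \<noteq> bot" by (simp add: filtermap_bot_iff)
  show "\<forall>\<^sub>F p in filtermap (\<lambda>k. (a k, t k)) sequentially. fst p \<in> C \<and> 0 \<le> snd p"
    using assms(1,2) by (simp add: eventually_filtermap)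
  show "((\<lambda>p. snd p) \<longlongrightarrow> 0) (filtermap (\<lambda>k. (a k, t k)) sequentially)"
    using assms(3) by (simp add: filterlim_filtermap)
  show "((\<lambda>p. snd p *\<^sub>R fst p) \<longlongrightarrow> X) (filtermap (\<lambda>k. (a k, t k)) sequentially)"
    using assms(4) by (simp add: filterlim_filtermap)
qed

lemma closed_preimage_usc_wrt:
  assumes usc: "usc_wrt Xp V1" and A: "closed A" and A_Xp: "\<And>X p. X \<in> A \<Longrightarrow> p \<in> Xp \<Longrightarrow> X + p \<in> A"
  shows "closed {x. V1 x \<in> A}"
  unfolding closed_def open_subopen[of "- {x. V1 x \<in> A}"]
proof
  fix x assume "x \<in> - {x. V1 x \<in> A}"
  then have "open (- A) \<and> V1 x \<in> - A" using A by auto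
  then have "\<exists>V. open V \<and> x \<in> V \<and> V1 ` V \<subseteq> {u - p |u p. u \<in> - A \<and> p \<in> Xp}"
    using usc unfolding usc_wrt_def by blast
  then obtain V where V: "open V" "x \<in> V" "V1 ` V \<subseteq> {u - p |u p. u \<in> - A \<and> p \<in> Xp}" by blast
  have "V \<subseteq> - {x. V1 x \<in> A}"
  proof
    fix y assume "y \<in> V"
    then obtain u p where "V1 y = u - p" "u \<notin> A" "p \<in> Xp" using V(3) by blast
    then show "y \<in> - {x. V1 x \<in> A}" using A_Xp[of "V1 y" p] by auto
  qed
  with V(1,2) show "\<exists>T. open T \<and> x \<in> T \<and> T \<subseteq> - {x. V1 x \<in> A}" by blast
qed

context risk_duality
begin

lemma rho_less_feasible:
  assumes "\<rho> X < ereal c"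
  obtains x where "x \<in> P" "X + V1 x \<in> A" "V0 x < c"
proof -
  have "\<exists>x\<in>{x \<in> P. X + V1 x \<in> A}. ereal (V0 x) < ereal c"
    using assms unfolding rho_def INF_less_iff .
  then show ?thesis using that by auto
qed

lemma rho_scale_eq_rho_zero:
  assumes "\<And>\<psi>. \<psi> \<in> DD P V0 V1 A \<Longrightarrow> \<psi> X = 0"
  shows "\<rho> (c *\<^sub>R X) = \<rho> 0"
proof -
  have "(SUP \<psi>\<in>DD P V0 V1 A. sigmaPV P V0 V1 \<psi> - ereal (\<psi> (c *\<^sub>R X)))
      = (SUP \<psi>\<in>DD P V0 V1 A. sigmaPV P V0 V1 \<psi> - ereal (\<psi> 0))"
  proof (rule SUP_cong[OF refl])
    fix \<psi> assume "\<psi> \<in> DD P V0 V1 A"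
    then have "\<psi> (c *\<^sub>R X) = \<psi> 0" using assms DD_linear by (simp add: linear_scale linear_0)
    then show "sigmaPV P V0 V1 \<psi> - ereal (\<psi> (c *\<^sub>R X)) = sigmaPV P V0 V1 \<psi> - ereal (\<psi> 0)" by simp
  qed
  then show ?thesis using rho_eq_SUP_DD[of "c *\<^sub>R X"] rho_eq_SUP_DD[of 0] by simp
qed

end

locale risk_strict = risk_duality P V0 V1 A
  for P :: "(real^'n) set" and V0 and V1 :: "real^'n \<Rightarrow> 'x::{real_vector,topological_space}" and A +
  fixes Xp :: "'x set"
  assumes Xp_cone: "convex_cone Xp" and A_Xp: "\<forall>X\<in>A. \<forall>p\<in>Xp. X + p \<in> A"
    and A_closed: "closed A" and A_pointed: "A \<inter> uminus ` A = {0}"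
    and V1_anti_star: "anti_star_shaped Xp V1" and V1_usc: "usc_wrt Xp V1"
    and LL_trivial: "LL P V0 V1 A = {0}"
begin

lemma closed_V1_preimage: "closed {x. V1 x \<in> A}"
  using closed_preimage_usc_wrt[OF V1_usc A_closed] A_Xp by blast

lemma V1_scale_in_A:
  assumes "V1 x \<in> A" "0 \<le> l" "l \<le> 1"
  shows "V1 (l *\<^sub>R x) \<in> A"
proof -
  have "V1 (l *\<^sub>R x) - l *\<^sub>R V1 x \<in> Xp" using V1_anti_star assms(2,3) unfolding anti_star_shaped_def by blast
  moreover have "l *\<^sub>R V1 x \<in> A" by (rule convex_cone_scaleR[OF A_cone assms(2,1)])
  ultimately have "l *\<^sub>R V1 x + (V1 (l *\<^sub>R x) - l *\<^sub>R V1 x) \<in> A" using A_Xp by blast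
  then show ?thesis by simp
qed

lemma feasible_asymptotic_direction:
  assumes y: "\<And>k. y k \<in> P" "\<And>k. V0 (y k) \<le> 1" "\<And>k. V1 (y k) \<in> A"
    and l: "\<And>k. 0 \<le> l k" "\<And>k. l k \<le> 1" "l \<longlonglongrightarrow> 0" and lim: "(\<lambda>k. l k *\<^sub>R y k) \<longlonglongrightarrow> d"
  shows "d \<in> LL P V0 V1 A"
proof -
  have "d \<in> asym_cone P" by (rule asym_cone_sequentially[OF y(1) l(1,3) lim])
  moreover have "(d, 0) \<in> asym_cone (epi V0)"
  proof (rule asym_cone_sequentially[of "\<lambda>k. (y k, 1)" _ l])
    show "(y k, 1) \<in> epi V0" for k using y(2) unfolding epi_def by simp
    have "(\<lambda>k. (l k *\<^sub>R y k, l k)) \<longlonglongrightarrow> (d, 0)" by (rule tendsto_Pair[OF lim l(3)])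
    then show "(\<lambda>k. l k *\<^sub>R (y k, 1::real)) \<longlonglongrightarrow> (d, 0)" by simp
  qed (use l in auto)
  then have "asym_fun V0 d \<le> 0" unfolding asym_fun_def by (intro Inf_lower2[of "ereal 0"]) auto
  moreover have "V1 d \<in> A"
    using closed_sequentially[OF closed_V1_preimage _ lim] V1_scale_in_A[OF y(3) l(1,2)] by blast
  then have "V1 d \<in> asym_cone A"
  proof (intro asym_cone_sequentially[of "\<lambda>k. real (Suc k) *\<^sub>R V1 d" _ "\<lambda>k. inverse (real (Suc k))"])
    show "real (Suc k) *\<^sub>R V1 d \<in> A" for k using convex_cone_scaleR[OF A_cone _ \<open>V1 d \<in> A\<close>] by simp
    show "(\<lambda>k. inverse (real (Suc k))) \<longlonglongrightarrow> 0" by (rule LIMSEQ_inverse_real_of_nat)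
  qed simp_all
  ultimately show ?thesis unfolding LL_def by simp
qed

text \<open>Normalising an escaping subsequence would produce a unit vector in \<open>\<L> = {0}\<close>.\<close>
lemma bounded_feasible_sequence:
  assumes y: "\<And>k. y k \<in> P" "\<And>k. V0 (y k) \<le> 1" "\<And>k. V1 (y k) \<in> A"
  shows "bounded (range y)"
proof (rule ccontr)
  assume unbounded: "\<not> bounded (range y)"
  have "\<exists>j. real k + 1 \<le> norm (y j)" for k
  proof (rule ccontr)
    assume "\<nexists>j. real k + 1 \<le> norm (y j)"
    then have "\<forall>x\<in>range y. norm x \<le> real k + 1" by (auto simp: not_le intro: less_imp_le)
    then show False using unbounded unfolding bounded_iff by blast
  qed
  then obtain n where n: "\<And>k. real k + 1 \<le> norm (y (n k))" by metis
  define z where "z k = inverse (norm (y (n k))) *\<^sub>R y (n k)" for k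
  have norm_y: "1 \<le> norm (y (n k))" for k using n[of k] by simp
  have norm_z: "norm (z k) = 1" for k
  proof -
    have "norm (y (n k)) \<noteq> 0" using norm_y[of k] by linarith
    then show ?thesis unfolding z_def by simp
  qed
  then have "bounded (range z)" unfolding bounded_iff by auto
  then obtain d r where r: "strict_mono r" "(z \<circ> r) \<longlonglongrightarrow> d"
    using bounded_imp_convergent_subsequence by blast
  have "(\<lambda>k. 1) \<longlonglongrightarrow> norm d" using tendsto_norm[OF r(2)] norm_z by (simp add: o_def)
  then have "norm d = 1" using LIMSEQ_unique[OF tendsto_const] by metis
  define l where "l k = inverse (norm (y (n (r k))))" for k
  have l: "0 \<le> l k" "l k \<le> 1" for k unfolding l_def using norm_y by (auto simp: inverse_le_1_iff)
  have "l \<longlonglongrightarrow> 0"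
  proof (rule Lim_null_comparison[OF always_eventually LIMSEQ_inverse_real_of_nat], rule allI)
    fix k
    have "real (Suc k) \<le> norm (y (n (r k)))" using n[of "r k"] seq_suble[OF r(1), of k] by simp
    then show "norm (l k) \<le> inverse (real (Suc k))" unfolding l_def by (simp add: le_imp_inverse_le)
  qed
  moreover have "(\<lambda>k. l k *\<^sub>R y (n (r k))) \<longlonglongrightarrow> d" using r(2) by (simp add: o_def z_def l_def)
  ultimately have "d \<in> LL P V0 V1 A"
    by (intro feasible_asymptotic_direction[of "\<lambda>k. y (n (r k))" l]) (use y l in auto)
  then show False using LL_trivial \<open>norm d = 1\<close> by simp
qed

end

context risk_strict
begin

text \<open>Scaling \<open>-n X + V1 x\<^sub>n \<in> A\<close> by \<open>1/n\<close> and using the upper semicontinuity of \<open>V1\<close> at the limit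
  of \<open>x\<^sub>n\<close> shows that \<open>-X\<close> lies in the closed set \<open>A\<close>.\<close>
lemma minus_in_A_if_convergent:
  assumes n: "strict_mono n" and seq: "\<And>k. - real (n k) *\<^sub>R X + V1 (x k) \<in> A" and lim: "x \<longlonglongrightarrow> x0"
  shows "- X \<in> A"
proof (rule ccontr)
  assume nA: "- X \<notin> A"
  note tvs = locally_convex_imp_tvs[OF locally_convex]
  define g where "g p = - X + fst p *\<^sub>R snd p" for p :: "real \<times> 'x"
  have "continuous_on UNIV g" unfolding g_def
    by (intro tvs_continuous_on_add[OF tvs] tvs_continuous_on_scaleR[OF tvs]
        continuous_on_const continuous_on_fst continuous_on_snd continuous_on_id)
  then have "open (g -` (- A))" using A_closed by (intro open_vimage) (simp_all add: closed_def)
  moreover have "(0, V1 x0) \<in> g -` (- A)" using nA by (simp add: g_def)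
  ultimately obtain S U where SU: "open S" "open U" "(0, V1 x0) \<in> S \<times> U" "S \<times> U \<subseteq> g -` (- A)"
    by (rule open_prod_elim)
  then have "open U \<and> V1 x0 \<in> U" by simp
  then have "\<exists>V. open V \<and> x0 \<in> V \<and> V1 ` V \<subseteq> {u - p |u p. u \<in> U \<and> p \<in> Xp}"
    using V1_usc unfolding usc_wrt_def by blast
  then obtain V where V: "open V" "x0 \<in> V" "V1 ` V \<subseteq> {u - p |u p. u \<in> U \<and> p \<in> Xp}" by blast
  have "eventually (\<lambda>k. x k \<in> V) sequentially" using lim V(1,2) by (rule topological_tendstoD)
  moreover have "eventually (\<lambda>k. inverse (real (n k)) \<in> S) sequentially"
  proof -
    have "(\<lambda>k. inverse (real (n k))) \<longlonglongrightarrow> 0"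
      using LIMSEQ_subseq_LIMSEQ[OF lim_inverse_n n] by (simp add: o_def)
    then show ?thesis using SU(1,3) by (intro topological_tendstoD) auto
  qed
  moreover have "eventually (\<lambda>k. 1 \<le> n k) sequentially"
    unfolding eventually_sequentially using seq_suble[OF n] by (metis order_trans)
  ultimately have "eventually (\<lambda>k. x k \<in> V \<and> inverse (real (n k)) \<in> S \<and> 1 \<le> n k) sequentially"
    by (intro eventually_conj)
  then obtain k where k: "x k \<in> V" "inverse (real (n k)) \<in> S" "1 \<le> n k"
    unfolding eventually_sequentially by blast
  then obtain u p where up: "V1 (x k) = u - p" "u \<in> U" "p \<in> Xp" using V(3) by blast
  define t where "t = inverse (real (n k))"
  have t: "0 < t" using k(3) by (simp add: t_def)
  have scaled: "t *\<^sub>R (- real (n k) *\<^sub>R X + V1 (x k)) \<in> A"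
    by (rule convex_cone_scaleR[OF A_cone _ seq]) (use t in simp)
  have eq: "t *\<^sub>R (- real (n k) *\<^sub>R X + V1 (x k)) = (- X + t *\<^sub>R u) - t *\<^sub>R p"
  proof -
    have "t *\<^sub>R (- real (n k) *\<^sub>R X) = - X" using k(3) by (simp add: t_def)
    then show ?thesis unfolding up(1) scaleR_add_right scaleR_diff_right by (simp add: algebra_simps)
  qed
  have "t *\<^sub>R p \<in> Xp" by (rule convex_cone_scaleR[OF Xp_cone _ up(3)]) (use t in simp)
  moreover have "(- X + t *\<^sub>R u) - t *\<^sub>R p \<in> A" using scaled unfolding eq .
  ultimately have "(- X + t *\<^sub>R u) - t *\<^sub>R p + t *\<^sub>R p \<in> A" using A_Xp by blast
  then have "g (t, u) \<in> A" by (simp add: g_def)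
  moreover have "(t, u) \<in> S \<times> U" using k(2) up(2) by (simp add: t_def)
  ultimately show False using SU(4) by blast
qed

text \<open>If every \<open>\<psi> \<in> \<D>\<close> vanished at \<open>X\<close>, duality would give \<open>\<rho>(-k X) = \<rho>(0) < 1\<close> for all \<open>k\<close>; the
  corresponding feasible points stay bounded, and a convergent subsequence forces \<open>-X \<in> A\<close>.\<close>
lemma DD_separates_A:
  assumes X: "X \<in> A" "X \<noteq> 0"
  obtains \<psi> where "\<psi> \<in> DD P V0 V1 A" "0 < \<psi> X"
proof -
  have "\<exists>\<psi>\<in>DD P V0 V1 A. 0 < \<psi> X"
  proof (rule ccontr)
    assume "\<not> (\<exists>\<psi>\<in>DD P V0 V1 A. 0 < \<psi> X)"
    then have vanish: "\<psi> X = 0" if "\<psi> \<in> DD P V0 V1 A" for \<psi>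
      using DD_nonneg[OF that X(1)] that by fastforce
    have "\<exists>x. x \<in> P \<and> - real k *\<^sub>R X + V1 x \<in> A \<and> V0 x < 1" for k
    proof -
      have "\<rho> (- real k *\<^sub>R X) = \<rho> 0" by (rule rho_scale_eq_rho_zero) (rule vanish)
      moreover have "\<rho> 0 < ereal 1" using rho_zero_le by (rule order.strict_trans1) simp
      ultimately have "\<rho> (- real k *\<^sub>R X) < ereal 1" by simp
      then show ?thesis by (rule rho_less_feasible) blast
    qed
    then obtain x where x: "\<And>k. x k \<in> P" "\<And>k. - real k *\<^sub>R X + V1 (x k) \<in> A" "\<And>k. V0 (x k) < 1"
      by metis
    have "V1 (x k) \<in> A" for k
    proof -
      have "(- real k *\<^sub>R X + V1 (x k)) + real k *\<^sub>R X \<in> A"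
        by (intro convex_cone_add[OF A_cone x(2)] convex_cone_scaleR[OF A_cone _ X(1)]) simp
      then show ?thesis by simp
    qed
    then have "bounded (range x)" by (intro bounded_feasible_sequence) (use x in \<open>auto intro: less_imp_le\<close>)
    then obtain x0 r where r: "strict_mono r" "(x \<circ> r) \<longlonglongrightarrow> x0"
      using bounded_imp_convergent_subsequence by blast
    have "- X \<in> A" by (rule minus_in_A_if_convergent[OF r(1) _ r(2)]) (metis x(2) comp_apply)
    then have "X \<in> A \<inter> uminus ` A" using X(1) by (auto intro: image_eqI[of _ _ "- X"])
    then show False using A_pointed X(2) by blast
  qed
  then show ?thesis using that by blast
qed

end

section \<open>Weak topologies and countable dense families\<close>

lemma openin_weak_top_basic: "f \<in> fs \<Longrightarrow> open U \<Longrightarrow> openin (weak_top S fs) {a \<in> S. f a \<in> U}"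
  unfolding weak_top_def by (rule topology_generated_by_Basis) blast

lemma weak_top_basic_nhd:
  assumes "openin (weak_top S fs) W" "x0 \<in> W"
  obtains L where "\<forall>z\<in>set L. fst z \<in> fs \<and> open (snd z)" "x0 \<in> {a \<in> S. \<forall>z\<in>set L. fst z a \<in> snd z}"
    "{a \<in> S. \<forall>z\<in>set L. fst z a \<in> snd z} \<subseteq> W"
proof -
  define B where "B L = {a \<in> S. \<forall>z\<in>set L. fst z a \<in> snd z}" for L :: "(_ \<times> real set) list"
  define good where "good L \<longleftrightarrow> (\<forall>z\<in>set L. fst z \<in> fs \<and> open (snd z))" for L :: "(_ \<times> real set) list"
  have "generate_topology_on {{a \<in> S. f a \<in> U} |f U. f \<in> fs \<and> open U} W"
    using assms(1) unfolding weak_top_def openin_topology_generated_by_iff .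
  then have "\<exists>L. good L \<and> x0 \<in> B L \<and> B L \<subseteq> W"
    using assms(2)
  proof (induction arbitrary: x0 rule: generate_topology_on.induct)
    case (Int a b)
    then have "x0 \<in> a" "x0 \<in> b" by auto
    then obtain L1 L2 where "good L1" "x0 \<in> B L1" "B L1 \<subseteq> a" "good L2" "x0 \<in> B L2" "B L2 \<subseteq> b"
      using Int.IH by meson
    moreover have "B (L1 @ L2) = B L1 \<inter> B L2" "good (L1 @ L2) \<longleftrightarrow> good L1 \<and> good L2"
      unfolding B_def good_def by auto
    ultimately show ?case by (intro exI[of _ "L1 @ L2"]) auto
  next
    case (UN K)
    then obtain k where "k \<in> K" "x0 \<in> k" by blast
    then show ?case using UN.IH[of k x0] by blast
  next
    case (Basis s)
    then obtain f U where "s = {a \<in> S. f a \<in> U}" "f \<in> fs" "open U" by blast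
    then show ?case using Basis.prems unfolding B_def good_def by (intro exI[of _ "[(f, U)]"]) auto
  qed simp
  then show ?thesis using that unfolding B_def good_def by blast
qed

lemma weak_top_eventually:
  assumes W: "openin (weak_top S fs) W" "x0 \<in> W"
    and lim: "\<And>f. f \<in> fs \<Longrightarrow> ((\<lambda>m. f (s m)) \<longlongrightarrow> f x0) F" and S: "eventually (\<lambda>m. s m \<in> S) F"
  shows "eventually (\<lambda>m. s m \<in> W) F"
proof -
  obtain L where L: "\<forall>z\<in>set L. fst z \<in> fs \<and> open (snd z)" "x0 \<in> {a \<in> S. \<forall>z\<in>set L. fst z a \<in> snd z}"
    "{a \<in> S. \<forall>z\<in>set L. fst z a \<in> snd z} \<subseteq> W"
    by (rule weak_top_basic_nhd[OF W])
  have "\<forall>z\<in>set L. eventually (\<lambda>m. fst z (s m) \<in> snd z) F"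
  proof
    fix z assume "z \<in> set L"
    then have "fst z \<in> fs" "open (snd z)" "fst z x0 \<in> snd z" using L(1,2) by auto
    then show "eventually (\<lambda>m. fst z (s m) \<in> snd z) F" using topological_tendstoD[OF lim] by blast
  qed
  then have "eventually (\<lambda>m. \<forall>z\<in>set L. fst z (s m) \<in> snd z) F" by (rule eventually_ball_finite[OF finite_set])
  with S have "eventually (\<lambda>m. s m \<in> {a \<in> S. \<forall>z\<in>set L. fst z a \<in> snd z}) F"
    by eventually_elim simp
  then show ?thesis by eventually_elim (use L(3) in blast)
qed

text \<open>On functionals bounded by \<open>c \<parallel>y\<parallel>\<close>, the value at \<open>y\<close> is controlled by one rational estimate of
  the value at a nearby point of the dense sequence \<open>ye\<close>.\<close>
lemma rational_eval_approximation:
  fixes \<Phi> :: "'a \<Rightarrow> 'y::real_normed_vector \<Rightarrow> real" and ye :: "nat \<Rightarrow> 'y"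
  assumes dense: "closure (range ye) = UNIV" and c: "0 \<le> c"
    and lin: "\<And>a. a \<in> D \<Longrightarrow> linear (\<Phi> a)" and bound: "\<And>a y. a \<in> D \<Longrightarrow> \<bar>\<Phi> a y\<bar> \<le> c * norm y"
    and a0: "a0 \<in> D" and V: "open V" "\<Phi> a0 y \<in> V"
  obtains k q e where "\<bar>\<Phi> a0 (ye k) - real_of_rat q\<bar> < real_of_rat e"
    "\<And>a. a \<in> D \<Longrightarrow> \<bar>\<Phi> a (ye k) - real_of_rat q\<bar> < real_of_rat e \<Longrightarrow> \<Phi> a y \<in> V"
proof -
  obtain \<epsilon> where \<epsilon>: "0 < \<epsilon>" "\<And>v. dist v (\<Phi> a0 y) < \<epsilon> \<Longrightarrow> v \<in> V" using V unfolding open_dist by blast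
  define \<delta> where "\<delta> = \<epsilon> / (4 * (c + 1))"
  have "0 < \<delta>" unfolding \<delta>_def using \<epsilon> c by simp
  moreover have "y \<in> closure (range ye)" using dense by simp
  ultimately obtain k where k: "dist (ye k) y < \<delta>" unfolding closure_approachable by blast
  have "\<Phi> a0 (ye k) - \<epsilon> / 8 < \<Phi> a0 (ye k) + \<epsilon> / 8" using \<epsilon>(1) by simp
  then obtain r where r: "r \<in> \<rat>" "\<Phi> a0 (ye k) - \<epsilon> / 8 < r" "r < \<Phi> a0 (ye k) + \<epsilon> / 8"
    using Rats_dense_in_real by blast
  from r(1) obtain q where "r = real_of_rat q" by (rule Rats_cases)
  with r have q: "\<bar>\<Phi> a0 (ye k) - real_of_rat q\<bar> < \<epsilon> / 8" unfolding abs_less_iff by linarith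
  have "\<epsilon> / 8 < \<epsilon> / 4" using \<epsilon>(1) by simp
  then obtain r' where r': "r' \<in> \<rat>" "\<epsilon> / 8 < r'" "r' < \<epsilon> / 4" using Rats_dense_in_real by blast
  from r'(1) obtain e where "r' = real_of_rat e" by (rule Rats_cases)
  with r' have e: "\<epsilon> / 8 < real_of_rat e" "real_of_rat e < \<epsilon> / 4" by simp_all
  have "c * \<delta> = \<epsilon> / 4 * (c / (c + 1))" unfolding \<delta>_def using c by (simp add: field_simps)
  also have "\<dots> < \<epsilon> / 4 * 1" using c \<epsilon>(1) by (intro mult_strict_left_mono) simp_all
  finally have c\<delta>: "c * \<delta> < \<epsilon> / 4" by simp
  have small: "\<bar>\<Phi> a (y - ye k)\<bar> < \<epsilon> / 4" if "a \<in> D" for a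
  proof -
    have "norm (y - ye k) \<le> \<delta>" using k by (simp add: dist_norm norm_minus_commute)
    then have "c * norm (y - ye k) \<le> c * \<delta>" using c by (rule mult_left_mono)
    then show ?thesis using bound[OF that, of "y - ye k"] c\<delta> by linarith
  qed
  show ?thesis
  proof (rule that[of k q e])
    show "\<bar>\<Phi> a0 (ye k) - real_of_rat q\<bar> < real_of_rat e" using q e by linarith
    fix a assume a: "a \<in> D" "\<bar>\<Phi> a (ye k) - real_of_rat q\<bar> < real_of_rat e"
    have "\<Phi> a y - \<Phi> a0 y = \<Phi> a (y - ye k) + (\<Phi> a (ye k) - real_of_rat q)
        + (real_of_rat q - \<Phi> a0 (ye k)) - \<Phi> a0 (y - ye k)"
      using lin[OF a(1)] lin[OF a0] by (simp add: linear_diff)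
    then have "dist (\<Phi> a y) (\<Phi> a0 y) < \<epsilon>"
      using small[OF a(1)] small[OF a0] a(2) q e unfolding dist_real_def by linarith
    then show "\<Phi> a y \<in> V" by (rule \<epsilon>(2))
  qed
qed

text \<open>A family of functionals on a separable normed space that is bounded by \<open>c \<parallel>y\<parallel>\<close> is separable
  for the topology of pointwise convergence.\<close>
lemma countable_weak_dense_subset:
  fixes \<Phi> :: "'a \<Rightarrow> 'y::real_normed_vector \<Rightarrow> real" and ye :: "nat \<Rightarrow> 'y"
  assumes dense: "closure (range ye) = UNIV" and c: "0 \<le> c" and DS: "D \<subseteq> S"
    and lin: "\<And>a. a \<in> D \<Longrightarrow> linear (\<Phi> a)" and bound: "\<And>a y. a \<in> D \<Longrightarrow> \<bar>\<Phi> a y\<bar> \<le> c * norm y"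
  shows "\<exists>Ds. Ds \<subseteq> D \<and> countable Ds \<and> (D \<noteq> {} \<longrightarrow> Ds \<noteq> {}) \<and>
    (\<forall>W a. openin (weak_top S {(\<lambda>a. \<Phi> a y) |y. True}) W \<longrightarrow> a \<in> D \<longrightarrow> a \<in> W \<longrightarrow> (\<exists>b\<in>Ds. b \<in> W))"
proof -
  define cnd where "cnd L a \<longleftrightarrow> (\<forall>z\<in>set L.
    \<bar>\<Phi> a (ye (fst z)) - real_of_rat (fst (snd z))\<bar> < real_of_rat (snd (snd z)))"
    for L :: "(nat \<times> rat \<times> rat) list" and a
  define pick where "pick L = (SOME a. a \<in> D \<and> cnd L a)" for L
  define Ds where "Ds = pick ` {L. \<exists>a\<in>D. cnd L a}"
  have pick: "pick L \<in> Ds \<and> pick L \<in> D \<and> cnd L (pick L)" if "a \<in> D" "cnd L a" for L a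
  proof -
    have "pick L \<in> D \<and> cnd L (pick L)"
      unfolding pick_def by (rule someI[of "\<lambda>a. a \<in> D \<and> cnd L a"]) (use that in blast)
    moreover have "pick L \<in> Ds" unfolding Ds_def using that by blast
    ultimately show ?thesis by blast
  qed
  show ?thesis
  proof (intro exI[of _ Ds] conjI allI impI)
    show "Ds \<subseteq> D" unfolding Ds_def using pick by blast
    show "countable Ds" unfolding Ds_def by simp
    show "Ds \<noteq> {}" if "D \<noteq> {}" using that pick[of _ "[]"] unfolding cnd_def by auto
    fix W a0 assume W: "openin (weak_top S {(\<lambda>a. \<Phi> a y) |y. True}) W" and a0: "a0 \<in> D" "a0 \<in> W"
    obtain L where L: "\<forall>z\<in>set L. fst z \<in> {(\<lambda>a. \<Phi> a y) |y. True} \<and> open (snd z)"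
      "a0 \<in> {a \<in> S. \<forall>z\<in>set L. fst z a \<in> snd z}" "{a \<in> S. \<forall>z\<in>set L. fst z a \<in> snd z} \<subseteq> W"
      using weak_top_basic_nhd[OF W a0(2)] by blast
    have "\<exists>w. cnd [w] a0 \<and> (\<forall>a\<in>D. cnd [w] a \<longrightarrow> fst z a \<in> snd z)" if "z \<in> set L" for z
    proof -
      have "fst z \<in> {(\<lambda>a. \<Phi> a y) |y. True}" "open (snd z)" using L(1) that by simp_all
      then obtain y where y: "fst z = (\<lambda>a. \<Phi> a y)" by (simp only: mem_Collect_eq) blast
      have "\<Phi> a0 y \<in> snd z" using L(2) that y by auto
      with \<open>open (snd z)\<close> obtain k q e
        where "\<bar>\<Phi> a0 (ye k) - real_of_rat q\<bar> < real_of_rat e"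
          "\<And>a. a \<in> D \<Longrightarrow> \<bar>\<Phi> a (ye k) - real_of_rat q\<bar> < real_of_rat e \<Longrightarrow> \<Phi> a y \<in> snd z"
        using rational_eval_approximation[where D = D and \<Phi> = \<Phi> and ye = ye and c = c,
            OF dense c lin bound a0(1)] by blast
      then show ?thesis unfolding cnd_def y by (intro exI[of _ "(k, q, e)"]) auto
    qed
    then obtain w where w: "\<And>z. z \<in> set L \<Longrightarrow> cnd [w z] a0 \<and> (\<forall>a\<in>D. cnd [w z] a \<longrightarrow> fst z a \<in> snd z)"
      by metis
    have cnd_map: "cnd (map w L) a \<longleftrightarrow> (\<forall>z\<in>set L. cnd [w z] a)" for a unfolding cnd_def by auto
    then have b: "pick (map w L) \<in> Ds \<and> pick (map w L) \<in> D \<and> cnd (map w L) (pick (map w L))"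
      using pick[OF a0(1)] w by blast
    then have "pick (map w L) \<in> {a \<in> S. \<forall>z\<in>set L. fst z a \<in> snd z}" using DS w cnd_map by blast
    then show "\<exists>b\<in>Ds. b \<in> W" using b L(3) by blast
  qed
qed

locale admissible_dual =
  fixes Phi :: "('x::{real_vector,topological_space} \<Rightarrow> real) \<Rightarrow> 'y::real_normed_vector \<Rightarrow> real"
  assumes Phi_bij: "bij_betw Phi (topdual TYPE('x)) {g. bounded_linear g}"
    and Phi_lincomb: "\<forall>\<psi>\<in>topdual TYPE('x). \<forall>\<phi>\<in>topdual TYPE('x). \<forall>a b.
      Phi (\<lambda>X. a * \<psi> X + b * \<phi> X) = (\<lambda>y. a * Phi \<psi> y + b * Phi \<phi> y)"
    and Phi_weak: "\<forall>U. openin (weak_top (topdual TYPE('x)) {(\<lambda>\<psi>. \<psi> X) |X. True}) U \<longrightarrow>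
      openin (weak_top (topdual TYPE('x)) {(\<lambda>\<psi>. Phi \<psi> y) |y. True}) U"
begin

lemma Phi_bounded_linear: "\<psi> \<in> topdual TYPE('x) \<Longrightarrow> bounded_linear (Phi \<psi>)"
  using bij_betwE[OF Phi_bij] by blast

lemma openin_eval:
  assumes "open V"
  shows "openin (weak_top (topdual TYPE('x)) {(\<lambda>\<psi>. Phi \<psi> y) |y. True}) {\<psi> \<in> topdual TYPE('x). \<psi> X \<in> V}"
proof -
  have "openin (weak_top (topdual TYPE('x)) {(\<lambda>\<psi>. \<psi> X) |X. True}) {\<psi> \<in> topdual TYPE('x). \<psi> X \<in> V}"
    by (rule openin_weak_top_basic) (use assms in auto)
  then show ?thesis using Phi_weak by blast
qed

lemma topdual_sum_Phi:
  fixes \<psi>s :: "nat \<Rightarrow> 'x \<Rightarrow> real"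
  assumes "\<And>k. \<psi>s k \<in> topdual TYPE('x)"
  shows "(\<lambda>X. \<Sum>k<m. \<psi>s k X) \<in> topdual TYPE('x) \<and> Phi (\<lambda>X. \<Sum>k<m. \<psi>s k X) = (\<lambda>y. \<Sum>k<m. Phi (\<psi>s k) y)"
proof (induction m)
  case 0
  have "(\<lambda>X. 0 * \<psi>s 0 X + 0 * \<psi>s 0 X) \<in> topdual TYPE('x)" by (rule topdual_lincomb[OF assms assms])
  moreover have "Phi (\<lambda>X. 0 * \<psi>s 0 X + 0 * \<psi>s 0 X) = (\<lambda>y. 0 * Phi (\<psi>s 0) y + 0 * Phi (\<psi>s 0) y)"
    using Phi_lincomb assms by blast
  ultimately show ?case by simp
next
  case (Suc m)
  define S where "S = (\<lambda>X. \<Sum>k<m. \<psi>s k X)"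
  have S: "S \<in> topdual TYPE('x)" "Phi S = (\<lambda>y. \<Sum>k<m. Phi (\<psi>s k) y)" using Suc.IH unfolding S_def by auto
  have "(\<lambda>X. 1 * S X + 1 * \<psi>s m X) \<in> topdual TYPE('x)" by (rule topdual_lincomb[OF S(1) assms])
  moreover have "Phi (\<lambda>X. 1 * S X + 1 * \<psi>s m X) = (\<lambda>y. 1 * Phi S y + 1 * Phi (\<psi>s m) y)"
    using Phi_lincomb S(1) assms by blast
  ultimately show ?case using S(2) unfolding S_def by simp
qed

text \<open>A series of functionals that converges absolutely in the dual norm of \<open>'y\<close> converges
  pointwise on \<open>'x\<close>, because pointwise convergence on \<open>'y\<close> implies pointwise convergence on \<open>'x\<close>.\<close>
lemma weak_series:
  fixes \<psi>s :: "nat \<Rightarrow> 'x \<Rightarrow> real"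
  assumes \<psi>s: "\<And>k. \<psi>s k \<in> topdual TYPE('x)" and bound: "\<And>k y. \<bar>Phi (\<psi>s k) y\<bar> \<le> h k * norm y"
    and h: "summable h"
  shows "\<exists>\<psi>\<in>topdual TYPE('x). \<forall>X. (\<lambda>k. \<psi>s k X) sums \<psi> X"
proof -
  define g where "g y = (\<Sum>k. Phi (\<psi>s k) y)" for y
  have hy: "(\<lambda>k. h k * norm y) sums (suminf h * norm y)" for y by (rule sums_mult2[OF summable_sums[OF h]])
  have g: "(\<lambda>k. Phi (\<psi>s k) y) sums g y" for y
    unfolding g_def using bound by (intro summable_sums summable_comparison_test'[OF sums_summable[OF hy]]) auto
  have lin: "linear (Phi (\<psi>s k))" for k using Phi_bounded_linear[OF \<psi>s] bounded_linear.linear by blast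
  have "bounded_linear g"
  proof (rule bounded_linear_intro[where K = "suminf h"])
    fix y1 y2
    have "(\<lambda>k. Phi (\<psi>s k) (y1 + y2)) sums (g y1 + g y2)"
      using sums_add[OF g g] lin by (simp add: linear_add)
    then show "g (y1 + y2) = g y1 + g y2" using g sums_unique2 by blast
  next
    fix r y
    have "(\<lambda>k. Phi (\<psi>s k) (r *\<^sub>R y)) sums (r * g y)" using sums_mult[OF g] lin by (simp add: linear_scale)
    then have "g (r *\<^sub>R y) = r * g y" using g[of "r *\<^sub>R y"] sums_unique2 by blast
    then show "g (r *\<^sub>R y) = r *\<^sub>R g y" by simp
  next
    fix y
    have "g y \<le> suminf h * norm y"
      by (rule sums_le[OF _ g hy]) (use bound in \<open>simp add: abs_le_iff\<close>)
    moreover have "- (suminf h * norm y) \<le> g y"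
    proof (rule sums_le[OF _ sums_minus[OF hy] g])
      fix k show "- (h k * norm y) \<le> Phi (\<psi>s k) y" using bound[of k y] unfolding abs_le_iff by linarith
    qed
    ultimately show "norm (g y) \<le> norm y * suminf h" by (simp add: abs_le_iff mult.commute)
  qed
  then obtain \<psi> where \<psi>: "\<psi> \<in> topdual TYPE('x)" "Phi \<psi> = g"
    using bij_betw_imp_surj_on[OF Phi_bij] by (metis imageE mem_Collect_eq)
  have "(\<lambda>k. \<psi>s k X) sums \<psi> X" for X
    unfolding sums_def
  proof (rule tendstoI)
    fix \<epsilon> :: real assume "0 < \<epsilon>"
    have "eventually (\<lambda>m. (\<lambda>X. \<Sum>k<m. \<psi>s k X) \<in> {\<phi> \<in> topdual TYPE('x). \<phi> X \<in> ball (\<psi> X) \<epsilon>}) sequentially"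
    proof (rule weak_top_eventually[OF openin_eval])
      show "\<psi> \<in> {\<phi> \<in> topdual TYPE('x). \<phi> X \<in> ball (\<psi> X) \<epsilon>}" using \<psi>(1) \<open>0 < \<epsilon>\<close> by simp
      fix f assume "f \<in> {(\<lambda>\<psi>. Phi \<psi> y) |y. True}"
      then obtain y where "f = (\<lambda>\<psi>. Phi \<psi> y)" by blast
      then show "((\<lambda>m. f (\<lambda>X. \<Sum>k<m. \<psi>s k X)) \<longlongrightarrow> f \<psi>) sequentially"
        using g[of y] topdual_sum_Phi[OF \<psi>s] \<psi>(2) unfolding sums_def by simp
    qed (use topdual_sum_Phi[OF \<psi>s] in auto)
    then show "eventually (\<lambda>m. dist (\<Sum>k<m. \<psi>s k X) (\<psi> X) < \<epsilon>) sequentially"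
      by eventually_elim (simp add: dist_commute)
  qed
  with \<psi>(1) show ?thesis by blast
qed

end

context risk_duality
begin

section \<open>Strictly positive dual elements\<close>

lemma DD_sigmaA_eq_0: "\<psi> \<in> DD P V0 V1 A \<Longrightarrow> sigmaA A \<psi> = 0"
proof -
  assume \<psi>: "\<psi> \<in> DD P V0 V1 A"
  have "0 \<le> sigmaA A \<psi>" unfolding sigmaA_def using DD_nonneg[OF \<psi>] by (intro INF_greatest) simp
  moreover have "sigmaA A \<psi> \<le> ereal (\<psi> 0)"
    unfolding sigmaA_def using convex_cone_contains_0[OF A_cone] by (rule INF_lower)
  ultimately show ?thesis using DD_linear[OF \<psi>] by (simp add: linear_0 zero_ereal_def)
qed

lemma DDstr_subset_DD: "DDstr P V0 V1 A \<subseteq> DD P V0 V1 A"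
  unfolding DDstr_def by blast

lemma DDstr_convex_combination:
  assumes \<phi>: "\<phi> \<in> DD P V0 V1 A" and \<psi>0: "\<psi>0 \<in> DDstr P V0 V1 A" and t: "0 < t" "t \<le> 1"
    and s: "sigmaPV P V0 V1 \<phi> = ereal s" and s0: "sigmaPV P V0 V1 \<psi>0 = ereal s0"
  shows "(\<lambda>Z. (1 - t) * \<phi> Z + t * \<psi>0 Z) \<in> DDstr P V0 V1 A"
    and "ereal ((1 - t) * s + t * s0) \<le> sigmaPV P V0 V1 (\<lambda>Z. (1 - t) * \<phi> Z + t * \<psi>0 Z)"
proof -
  define \<psi> where "\<psi> = (\<lambda>Z. (1 - t) * \<phi> Z + t * \<psi>0 Z)"
  have \<psi>0_DD: "\<psi>0 \<in> DD P V0 V1 A" using \<psi>0 DDstr_subset_DD by blast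
  show sP: "ereal ((1 - t) * s + t * s0) \<le> sigmaPV P V0 V1 \<psi>"
    unfolding sigmaPV_def
  proof (rule INF_greatest)
    fix x assume x: "x \<in> P"
    have "s \<le> V0 x - \<phi> (V1 x)" "s0 \<le> V0 x - \<psi>0 (V1 x)"
      using sigmaPV_le[OF x, of \<phi>] sigmaPV_le[OF x, of \<psi>0] s s0 by simp_all
    then have "(1 - t) * s + t * s0 \<le> (1 - t) * (V0 x - \<phi> (V1 x)) + t * (V0 x - \<psi>0 (V1 x))"
      using t by (intro add_mono mult_left_mono) simp_all
    then show "ereal ((1 - t) * s + t * s0) \<le> ereal (V0 x - \<psi> (V1 x))"
      unfolding \<psi>_def by (simp add: algebra_simps)
  qed
  have nonneg: "0 \<le> \<psi> W" if "W \<in> A" for W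
    using DD_nonneg[OF \<phi> that] DD_nonneg[OF \<psi>0_DD that] t unfolding \<psi>_def
    by (intro add_nonneg_nonneg mult_nonneg_nonneg) auto
  have "\<psi> \<in> topdual TYPE('x)" unfolding \<psi>_def by (intro topdual_lincomb DD_topdual \<phi> \<psi>0_DD)
  moreover have "0 \<le> sigmaA A \<psi>" unfolding sigmaA_def using nonneg by (intro INF_greatest) simp
  then have "- \<infinity> < sigmaA A \<psi>" by (rule order.strict_trans2[rotated]) simp
  moreover have "- \<infinity> < sigmaPV P V0 V1 \<psi>" using sP by (rule order.strict_trans2[rotated]) simp
  moreover have "0 < \<psi> W" if "W \<in> A - {0}" for W
  proof -
    have "0 < \<psi>0 W" using \<psi>0 that unfolding DDstr_def by blast
    then show ?thesis using DD_nonneg[OF \<phi>, of W] that t unfolding \<psi>_def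
      by (intro add_nonneg_pos mult_nonneg_nonneg mult_pos_pos) auto
  qed
  ultimately show "\<psi> \<in> DDstr P V0 V1 A" unfolding DDstr_def DD_def by blast
qed

lemma SUP_DDstr_eq_SUP_DD:
  assumes \<psi>0: "\<psi>0 \<in> DDstr P V0 V1 A"
  shows "(SUP \<psi>\<in>DDstr P V0 V1 A. sigmaPV P V0 V1 \<psi> - ereal (\<psi> X))
       = (SUP \<psi>\<in>DD P V0 V1 A. sigmaPV P V0 V1 \<psi> - ereal (\<psi> X))" (is "?S = _")
proof (rule antisym)
  show "?S \<le> (SUP \<psi>\<in>DD P V0 V1 A. sigmaPV P V0 V1 \<psi> - ereal (\<psi> X))"
    by (rule SUP_subset_mono[OF DDstr_subset_DD order_refl])
  show "(SUP \<psi>\<in>DD P V0 V1 A. sigmaPV P V0 V1 \<psi> - ereal (\<psi> X)) \<le> ?S"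
  proof (rule SUP_least)
    fix \<phi> assume \<phi>: "\<phi> \<in> DD P V0 V1 A"
    obtain s where s: "sigmaPV P V0 V1 \<phi> = ereal s" using DD_sigmaPV_real[OF \<phi>] .
    obtain s0 where s0: "sigmaPV P V0 V1 \<psi>0 = ereal s0"
      using DD_sigmaPV_real \<psi>0 DDstr_subset_DD by blast
    define f where "f t = (1 - t) * (s - \<phi> X) + t * (s0 - \<psi>0 X)" for t
    have "ereal (s - \<phi> X) \<le> ?S"
    proof (rule ereal_le_real)
      fix z assume z: "?S \<le> ereal z"
      have "f t \<le> z" if t: "0 < t" "t \<le> 1" for t
      proof -
        note str = DDstr_convex_combination[OF \<phi> \<psi>0 t s s0]
        have "ereal (f t) \<le> sigmaPV P V0 V1 (\<lambda>Z. (1 - t) * \<phi> Z + t * \<psi>0 Z) - ereal ((1 - t) * \<phi> X + t * \<psi>0 X)"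
          using str(2) unfolding f_def by (cases "sigmaPV P V0 V1 (\<lambda>Z. (1 - t) * \<phi> Z + t * \<psi>0 Z)")
            (auto simp: algebra_simps)
        also have "\<dots> \<le> ?S" using str(1) by (rule SUP_upper)
        finally have "ereal (f t) \<le> ereal z" using z by (rule order_trans)
        then show ?thesis by simp
      qed
      moreover have "(f \<longlongrightarrow> s - \<phi> X) (at_right 0)" unfolding f_def by (auto intro!: tendsto_eq_intros)
      moreover have "eventually (\<lambda>t. 0 < t \<and> t \<le> 1) (at_right (0::real))"
        by (auto simp: eventually_at_right_field intro: exI[of _ 1])
      ultimately have "s - \<phi> X \<le> z"
        by (intro tendsto_upperbound[of f _ "at_right 0"]) (auto elim: eventually_mono)
      then show "ereal (s - \<phi> X) \<le> ereal z" by simp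
    qed
    then show "sigmaPV P V0 V1 \<phi> - ereal (\<phi> X) \<le> ?S" using s by simp
  qed
qed

end

locale risk_admissible = risk_strict P V0 V1 A Xp + admissible_dual Phi
  for P :: "(real^'n) set" and V0 and V1 :: "real^'n \<Rightarrow> 'x::{real_vector,topological_space}" and A Xp
    and Phi :: "('x \<Rightarrow> real) \<Rightarrow> 'y::real_normed_vector \<Rightarrow> real" +
  fixes ye :: "nat \<Rightarrow> 'y"
  assumes ye_dense: "closure (range ye) = UNIV"
begin

definition DDn :: "nat \<Rightarrow> ('x \<Rightarrow> real) set" where
  "DDn n = {\<psi> \<in> DD P V0 V1 A. ereal (- real n) \<le> sigmaPV P V0 V1 \<psi> \<and> (\<forall>y. \<bar>Phi \<psi> y\<bar> \<le> real n * norm y)}"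

lemma DDn_cover:
  assumes \<psi>: "\<psi> \<in> DD P V0 V1 A" obtains n where "\<psi> \<in> DDn n"
proof -
  obtain s where s: "sigmaPV P V0 V1 \<psi> = ereal s" using DD_sigmaPV_real[OF \<psi>] .
  obtain K where K: "\<And>y. norm (Phi \<psi> y) \<le> norm y * K"
    using bounded_linear.bounded[OF Phi_bounded_linear[OF DD_topdual[OF \<psi>]]] by blast
  define n where "n = nat \<lceil>max (- s) K\<rceil>"
  have "- real n \<le> s" "K \<le> real n" unfolding n_def by linarith+
  then have "\<bar>Phi \<psi> y\<bar> \<le> real n * norm y" for y
    using K[of y] mult_left_mono[of K "real n" "norm y"] by (simp add: mult.commute)
  then have "\<psi> \<in> DDn n" using \<psi> s \<open>- real n \<le> s\<close> unfolding DDn_def by simp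
  then show ?thesis by (rule that)
qed

lemma countable_separating_family:
  obtains Ds where "countable Ds" "Ds \<noteq> {}" "\<And>\<psi>. \<psi> \<in> Ds \<Longrightarrow> \<exists>n. \<psi> \<in> DDn n"
    "\<And>X. X \<in> A \<Longrightarrow> X \<noteq> 0 \<Longrightarrow> \<exists>\<psi>\<in>Ds. 0 < \<psi> X"
proof -
  define dense_in where "dense_in n Ds \<longleftrightarrow> Ds \<subseteq> DDn n \<and> countable Ds \<and> (DDn n \<noteq> {} \<longrightarrow> Ds \<noteq> {}) \<and>
      (\<forall>W \<psi>. openin (weak_top (topdual TYPE('x)) {(\<lambda>\<psi>. Phi \<psi> y) |y. True}) W \<longrightarrow> \<psi> \<in> DDn n \<longrightarrow> \<psi> \<in> W
        \<longrightarrow> (\<exists>b\<in>Ds. b \<in> W))" for n Ds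
  have "\<exists>Ds. dense_in n Ds" for n
  proof -
    have sub: "DDn n \<subseteq> topdual TYPE('x)" unfolding DDn_def using DD_topdual by blast
    have lin: "linear (Phi \<psi>)" if "\<psi> \<in> DDn n" for \<psi>
      using that Phi_bounded_linear DD_topdual bounded_linear.linear unfolding DDn_def by blast
    have bnd: "\<bar>Phi \<psi> y\<bar> \<le> real n * norm y" if "\<psi> \<in> DDn n" for \<psi> y using that unfolding DDn_def by blast
    show ?thesis unfolding dense_in_def
      by (rule countable_weak_dense_subset[where D = "DDn n" and S = "topdual TYPE('x)" and \<Phi> = Phi
          and c = "real n", OF ye_dense of_nat_0_le_iff sub lin bnd])
  qed
  define Dsn where "Dsn n = (SOME Ds. dense_in n Ds)" for n
  have Dsn: "dense_in n (Dsn n)" for n unfolding Dsn_def by (rule someI_ex) fact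
  show ?thesis
  proof (rule that[of "\<Union>n. Dsn n"])
    show "countable (\<Union>n. Dsn n)" using Dsn unfolding dense_in_def by (intro countable_UN) auto
    obtain \<psi> where "\<psi> \<in> DD P V0 V1 A" using DD_nonempty by blast
    then obtain n where "\<psi> \<in> DDn n" by (rule DDn_cover)
    then show "(\<Union>n. Dsn n) \<noteq> {}" using Dsn[of n] unfolding dense_in_def by blast
    show "\<exists>n. \<psi> \<in> DDn n" if "\<psi> \<in> (\<Union>n. Dsn n)" for \<psi> using that Dsn unfolding dense_in_def by blast
    fix X assume X: "X \<in> A" "X \<noteq> 0"
    obtain \<psi>1 where \<psi>1: "\<psi>1 \<in> DD P V0 V1 A" "0 < \<psi>1 X" by (rule DD_separates_A[OF X])
    obtain n where n: "\<psi>1 \<in> DDn n" by (rule DDn_cover[OF \<psi>1(1)])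
    have "openin (weak_top (topdual TYPE('x)) {(\<lambda>\<psi>. Phi \<psi> y) |y. True})
        {\<psi> \<in> topdual TYPE('x). \<psi> X \<in> {0<..}}" by (rule openin_eval) simp
    moreover have "\<psi>1 \<in> {\<psi> \<in> topdual TYPE('x). \<psi> X \<in> {0<..}}" using \<psi>1 DD_topdual by simp
    ultimately obtain b where "b \<in> Dsn n" "b \<in> {\<psi> \<in> topdual TYPE('x). \<psi> X \<in> {0<..}}"
      using Dsn[of n] n unfolding dense_in_def by blast
    then show "\<exists>\<psi>\<in>\<Union>n. Dsn n. 0 < \<psi> X" by auto
  qed
qed

text \<open>The weights \<open>2\<^sup>-\<^sup>k\<^sup>-\<^sup>1 / (1 + n\<^sub>k)\<close> make both the series of functionals and the series of
  the lower bounds \<open>-n\<^sub>k\<close> of \<open>\<sigma>\<^sub>P\<^sub>,\<^sub>V\<^sub>0\<^sub>,\<^sub>V\<^sub>1\<close> summable.\<close>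
lemma weighted_DD_series:
  fixes \<psi>s :: "nat \<Rightarrow> 'x \<Rightarrow> real" and M :: "nat \<Rightarrow> nat"
  assumes \<psi>s: "\<And>k. \<psi>s k \<in> DDn (M k)"
  defines "c k \<equiv> (1 / 2) ^ Suc k / (1 + real (M k))"
  shows "\<exists>\<psi>\<in>topdual TYPE('x). \<forall>X. (\<lambda>k. c k * \<psi>s k X) sums \<psi> X"
proof -
  have T: "\<psi>s k \<in> topdual TYPE('x)" for k using \<psi>s DD_topdual unfolding DDn_def by blast
  have bound: "\<bar>Phi (\<lambda>X. c k * \<psi>s k X) y\<bar> \<le> (1 / 2) ^ Suc k * norm y" for k y
  proof -
    have "Phi (\<lambda>X. c k * \<psi>s k X + 0 * \<psi>s k X) = (\<lambda>y. c k * Phi (\<psi>s k) y + 0 * Phi (\<psi>s k) y)"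
      by (rule Phi_lincomb[rule_format, OF T T])
    then have "\<bar>Phi (\<lambda>X. c k * \<psi>s k X) y\<bar> = c k * \<bar>Phi (\<psi>s k) y\<bar>" unfolding c_def by (simp add: abs_mult)
    also have "\<dots> \<le> c k * (real (M k) * norm y)"
      using \<psi>s[of k] unfolding DDn_def c_def by (intro mult_left_mono) auto
    also have "\<dots> = (1 / 2) ^ Suc k * (real (M k) / (1 + real (M k))) * norm y" unfolding c_def by simp
    also have "\<dots> \<le> (1 / 2) ^ Suc k * 1 * norm y" by (intro mult_right_mono mult_left_mono) auto
    finally show ?thesis by simp
  qed
  have "summable (\<lambda>k. (1 / 2 :: real) ^ Suc k)" by simp
  then show ?thesis by (rule weak_series[of "\<lambda>k X. c k * \<psi>s k X", OF topdual_scale[OF T] bound])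
qed

text \<open>Normalising the weighted series of a separating sequence in \<open>\<D>\<close> yields a strictly positive
  functional; the bound \<open>\<sigma>\<^sub>P\<^sub>,\<^sub>V\<^sub>0\<^sub>,\<^sub>V\<^sub>1(\<psi>\<^sub>k) \<ge> -n\<^sub>k\<close> keeps its dual objective finite.\<close>
lemma DDstr_of_separating_sequence:
  fixes \<psi>s :: "nat \<Rightarrow> 'x \<Rightarrow> real" and M :: "nat \<Rightarrow> nat"
  assumes \<psi>s: "\<And>k. \<psi>s k \<in> DDn (M k)" and separating: "\<And>X. X \<in> A \<Longrightarrow> X \<noteq> 0 \<Longrightarrow> \<exists>j. 0 < \<psi>s j X"
  shows "DDstr P V0 V1 A \<noteq> {}"
proof -
  define h where "h k = (1 / 2 :: real) ^ Suc k" for k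
  define c where "c k = h k / (1 + real (M k))" for k
  have "\<exists>\<psi>\<in>topdual TYPE('x). \<forall>X. (\<lambda>k. c k * \<psi>s k X) sums \<psi> X"
    unfolding c_def h_def by (rule weighted_DD_series) (rule \<psi>s)
  then obtain \<psi> where \<psi>: "\<psi> \<in> topdual TYPE('x)" "\<And>X. (\<lambda>k. c k * \<psi>s k X) sums \<psi> X" by blast
  have DD: "\<psi>s k \<in> DD P V0 V1 A" for k using \<psi>s unfolding DDn_def by blast
  have c_pos: "0 < c k" for k unfolding c_def h_def by simp
  have h_sums: "h sums 1" unfolding h_def using sums_mult[OF geometric_sums[of "1 / 2 :: real"], of "1 / 2"] by simp
  have c_le: "c k \<le> h k" and cM: "c k * real (M k) \<le> h k" for k
  proof -
    have h: "0 \<le> h k" unfolding h_def by simp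
    have "c k = h k * (1 / (1 + real (M k)))" "c k * real (M k) = h k * (real (M k) / (1 + real (M k)))"
      unfolding c_def by simp_all
    moreover have "h k * (1 / (1 + real (M k))) \<le> h k * 1" "h k * (real (M k) / (1 + real (M k))) \<le> h k * 1"
      using h by (intro mult_left_mono; simp)+
    ultimately show "c k \<le> h k" "c k * real (M k) \<le> h k" by simp_all
  qed
  have "summable c"
    by (rule summable_comparison_test'[OF sums_summable[OF h_sums], of 0]) (use c_pos c_le in \<open>auto simp: less_imp_le\<close>)
  define C where "C = suminf c"
  have C: "0 < C" unfolding C_def using c_pos \<open>summable c\<close> by (intro suminf_pos) auto
  have nonneg: "0 \<le> \<psi> W" if "W \<in> A" for W
    using DD_nonneg[OF DD that] c_pos by (intro sums_le[OF _ sums_zero \<psi>(2)]) (simp add: less_imp_le)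
  have pos: "0 < \<psi> W" if W: "W \<in> A" "W \<noteq> 0" for W
  proof -
    obtain j where "0 < \<psi>s j W" using separating[OF W] by blast
    then have "0 < (\<Sum>k. c k * \<psi>s k W)"
      using DD_nonneg[OF DD W(1)] c_pos sums_summable[OF \<psi>(2)]
      by (intro suminf_pos2[of _ j]) (auto simp: less_imp_le)
    then show ?thesis using sums_unique[OF \<psi>(2)] by simp
  qed
  have lower: "- 1 \<le> C * V0 x - \<psi> (V1 x)" if x: "x \<in> P" for x
  proof -
    have termwise: "- h k \<le> c k * V0 x - c k * \<psi>s k (V1 x)" for k
    proof -
      have "ereal (- real (M k)) \<le> sigmaPV P V0 V1 (\<psi>s k)" using \<psi>s[of k] unfolding DDn_def by blast
      then have "ereal (- real (M k)) \<le> ereal (V0 x - \<psi>s k (V1 x))"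
        using sigmaPV_le[OF x, of "\<psi>s k"] by (rule order_trans)
      then have "- real (M k) \<le> V0 x - \<psi>s k (V1 x)" by simp
      then have "c k * (- real (M k)) \<le> c k * (V0 x - \<psi>s k (V1 x))"
        using c_pos[of k] by (intro mult_left_mono) simp_all
      then show ?thesis using cM[of k] by (simp add: right_diff_distrib)
    qed
    have "(\<lambda>k. c k * V0 x - c k * \<psi>s k (V1 x)) sums (C * V0 x - \<psi> (V1 x))"
      unfolding C_def by (intro sums_diff sums_mult2 summable_sums \<open>summable c\<close> \<psi>(2))
    then show ?thesis by (rule sums_le[OF termwise sums_minus[OF h_sums]])
  qed
  define \<psi>' where "\<psi>' X = inverse C * \<psi> X" for X
  have "ereal (- inverse C) \<le> sigmaPV P V0 V1 \<psi>'"
    unfolding sigmaPV_def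
  proof (rule INF_greatest)
    fix x assume "x \<in> P"
    then have "- inverse C \<le> V0 x - inverse C * \<psi> (V1 x)" using lower[of x] C by (simp add: field_simps)
    then show "ereal (- inverse C) \<le> ereal (V0 x - \<psi>' (V1 x))" unfolding \<psi>'_def by simp
  qed
  then have "- \<infinity> < sigmaPV P V0 V1 \<psi>'" by (rule order.strict_trans2[rotated]) simp
  moreover have "0 \<le> sigmaA A \<psi>'"
    unfolding sigmaA_def \<psi>'_def using nonneg C by (intro INF_greatest) simp
  then have "- \<infinity> < sigmaA A \<psi>'" by (rule order.strict_trans2[rotated]) simp
  moreover have "\<psi>' \<in> topdual TYPE('x)" unfolding \<psi>'_def by (rule topdual_scale[OF \<psi>(1)])
  ultimately have "\<psi>' \<in> DD P V0 V1 A" unfolding DD_def by blast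
  moreover have "0 < \<psi>' W" if "W \<in> A - {0}" for W
    using pos[of W] that C unfolding \<psi>'_def by (intro mult_pos_pos) auto
  ultimately have "\<psi>' \<in> DDstr P V0 V1 A" unfolding DDstr_def by blast
  then show ?thesis by blast
qed

theorem DDstr_nonempty: "DDstr P V0 V1 A \<noteq> {}"
proof -
  obtain Ds where Ds: "countable Ds" "Ds \<noteq> {}" "\<And>\<psi>. \<psi> \<in> Ds \<Longrightarrow> \<exists>n. \<psi> \<in> DDn n"
    "\<And>X. X \<in> A \<Longrightarrow> X \<noteq> 0 \<Longrightarrow> \<exists>\<psi>\<in>Ds. 0 < \<psi> X"
    using countable_separating_family by blast
  define \<psi>s where "\<psi>s = from_nat_into Ds"
  have range: "range \<psi>s = Ds" unfolding \<psi>s_def using Ds(2,1) by (rule range_from_nat_into)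
  then have "\<exists>n. \<psi>s k \<in> DDn n" for k using Ds(3) by blast
  then obtain M where "\<And>k. \<psi>s k \<in> DDn (M k)" by metis
  moreover have "\<exists>j. 0 < \<psi>s j X" if "X \<in> A" "X \<noteq> 0" for X using Ds(4)[OF that] range by auto
  ultimately show ?thesis by (rule DDstr_of_separating_sequence)
qed

end

theorem mainTheorem17:
  fixes Xp :: "'x::{real_vector,topological_space} set"
    and P :: "(real^'n) set"
    and V0 :: "real^'n \<Rightarrow> real"
    and V1 :: "real^'n \<Rightarrow> 'x"
    and A :: "'x set"
  assumes tvs: "tvs TYPE('x)"
    and Xp: "convex_cone Xp"
    and P0: "0 \<in> P"
    and V00: "V0 0 = 0" and V0neg: "\<forall>x. V0 x \<ge> - V0 (- x)"
    and V10: "V1 0 = 0" and V1neg: "\<forall>x. - V1 (- x) - V1 x \<in> Xp"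
    and A0: "0 \<in> A" and AXp: "\<forall>X\<in>A. \<forall>p\<in>Xp. X + p \<in> A"
    and lc: "locally_convex TYPE('x)"
    and proper: "proper_fun (rho P V0 V1 A)"
    and cvx: "convex_efun (rho P V0 V1 A)"
    and lsc_rho: "lsc (rho P V0 V1 A)"
    and adm: "admissible_pair_via TYPE('y::real_normed_vector) TYPE('x)"
    and Acl: "closed A" and Acone: "convex_cone A" and Apointed: "A \<inter> uminus ` A = {0}"
    and Pcl: "closed P"
    and V0lsc: "lsc V0"
    and V1as: "anti_star_shaped Xp V1"
    and V1usc: "usc_wrt Xp V1"
    and L0: "LL P V0 V1 A = {0}"
  shows "DDstr P V0 V1 A \<noteq> {} \<and>
         (\<forall>\<psi> \<in> DDstr P V0 V1 A. sigmaA A \<psi> = 0) \<and>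
         (\<forall>X. rho P V0 V1 A X = (SUP \<psi> \<in> DDstr P V0 V1 A. sigmaPV P V0 V1 \<psi> - ereal (\<psi> X)))"
proof -
  obtain Dy :: "'y set" and Phi :: "('x \<Rightarrow> real) \<Rightarrow> 'y \<Rightarrow> real"
    where Dy: "countable Dy" "closure Dy = UNIV" and Phi: "admissible_dual Phi"
    using adm unfolding admissible_pair_via_def admissible_dual_def by blast
  have "Dy \<noteq> {}" using Dy(2) by auto
  then have "closure (range (from_nat_into Dy)) = UNIV" using Dy by simp
  then interpret risk_admissible P V0 V1 A Xp Phi "from_nat_into Dy"
    using lc P0 V00 V10 Acone proper cvx lsc_rho Xp AXp Acl Apointed V1as V1usc L0 Phi
    by (simp add: risk_admissible_def risk_strict_def risk_strict_axioms_def risk_duality_def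
        risk_admissible_axioms_def)
  obtain \<psi>0 where "\<psi>0 \<in> DDstr P V0 V1 A" using DDstr_nonempty by blast
  then show ?thesis
    using DDstr_nonempty DD_sigmaA_eq_0 DDstr_subset_DD rho_eq_SUP_DD SUP_DDstr_eq_SUP_DD by auto
qed

end
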